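(* Let $G$ be a snark with colouring defect $\mathrm{df}(G)=3$. If $G$ contains a hexagonal core that intersects a triangle (shares at least one vertex with a triangle of $G$), then $\pi(G)=4$.
   Context: Graphs are finite; loops and multiple edges are allowed. A snark is a $2$-connected cubic graph with no proper $3$-edge-colouring. A $3$-array of a bridgeless cubic graph $H$ is a set of three perfect matchings of $H$; an edge is uncovered if it lies in none of them and simply covered if in exactly one. The colouring defect $\mathrm{df}(H)$ is the minimum number of uncovered edges over all $3$-arrays; a $3$-array attaining this minimum is optimal. The core of a $3$-array is the subgraph formed by all edges that are not simply covered. If $\mathrm{df}(H)=3$, the core of every optimal $3$-array is an induced $6$-cycle, called a hexagonal core. The perfect matching index $\pi(G)$ is the smallest number of perfect matchings of $G$ whose union is $E(G)$. *)

theory Defs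
  imports Main
begin

text \<open>Finite multigraphs (loops and parallel edges allowed): a vertex set V, an edge set E
  and an endpoint map ep assigning to each edge its two (possibly equal) ends.\<close>

definition ends :: "('e \<Rightarrow> 'v \<times> 'v) \<Rightarrow> 'e \<Rightarrow> 'v set" where
  "ends ep e = {fst (ep e), snd (ep e)}"

definition is_loop :: "('e \<Rightarrow> 'v \<times> 'v) \<Rightarrow> 'e \<Rightarrow> bool" where
  "is_loop ep e \<longleftrightarrow> fst (ep e) = snd (ep e)"

definition graph :: "'v set \<Rightarrow> 'e set \<Rightarrow> ('e \<Rightarrow> 'v \<times> 'v) \<Rightarrow> bool" where
  "graph V E ep \<longleftrightarrow> finite V \<and> finite E \<and> (\<forall>e\<in>E. fst (ep e) \<in> V \<and> snd (ep e) \<in> V)"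

text \<open>Degree: a loop contributes 2.\<close>
definition degree :: "'e set \<Rightarrow> ('e \<Rightarrow> 'v \<times> 'v) \<Rightarrow> 'v \<Rightarrow> nat" where
  "degree E ep v = card {e\<in>E. fst (ep e) = v} + card {e\<in>E. snd (ep e) = v}"

definition cubic :: "'v set \<Rightarrow> 'e set \<Rightarrow> ('e \<Rightarrow> 'v \<times> 'v) \<Rightarrow> bool" where
  "cubic V E ep \<longleftrightarrow> graph V E ep \<and> (\<forall>v\<in>V. degree E ep v = 3)"

definition adj_in :: "'e set \<Rightarrow> ('e \<Rightarrow> 'v \<times> 'v) \<Rightarrow> 'v set \<Rightarrow> ('v \<times> 'v) set" where
  "adj_in E ep S = {(x, y). x \<in> S \<and> y \<in> S \<and> (\<exists>e\<in>E. ep e = (x, y) \<or> ep e = (y, x))}"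

definition connected_on :: "'e set \<Rightarrow> ('e \<Rightarrow> 'v \<times> 'v) \<Rightarrow> 'v set \<Rightarrow> bool" where
  "connected_on E ep S \<longleftrightarrow> (\<forall>x\<in>S. \<forall>y\<in>S. (x, y) \<in> (adj_in E ep S)\<^sup>*)"

definition two_connected :: "'v set \<Rightarrow> 'e set \<Rightarrow> ('e \<Rightarrow> 'v \<times> 'v) \<Rightarrow> bool" where
  "two_connected V E ep \<longleftrightarrow> card V \<ge> 3 \<and> connected_on E ep V \<and>
     (\<forall>v\<in>V. connected_on E ep (V - {v}))"

text \<open>Proper 3-edge-colouring: adjacent (distinct, sharing an end) edges get different colours;
  a loop is adjacent to itself, so graphs with loops are not colourable.\<close>
definition three_edge_colourable :: "'e set \<Rightarrow> ('e \<Rightarrow> 'v \<times> 'v) \<Rightarrow> bool" where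
  "three_edge_colourable E ep \<longleftrightarrow> (\<exists>c :: 'e \<Rightarrow> nat.
      (\<forall>e\<in>E. c e < 3 \<and> \<not> is_loop ep e) \<and>
      (\<forall>e\<in>E. \<forall>f\<in>E. e \<noteq> f \<and> ends ep e \<inter> ends ep f \<noteq> {} \<longrightarrow> c e \<noteq> c f))"

definition snark :: "'v set \<Rightarrow> 'e set \<Rightarrow> ('e \<Rightarrow> 'v \<times> 'v) \<Rightarrow> bool" where
  "snark V E ep \<longleftrightarrow> cubic V E ep \<and> two_connected V E ep \<and> \<not> three_edge_colourable E ep"

definition perfect_matching :: "'v set \<Rightarrow> 'e set \<Rightarrow> ('e \<Rightarrow> 'v \<times> 'v) \<Rightarrow> 'e set \<Rightarrow> bool" where
  "perfect_matching V E ep M \<longleftrightarrow> M \<subseteq> E \<and> (\<forall>e\<in>M. \<not> is_loop ep e) \<and>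
     (\<forall>v\<in>V. card {e\<in>M. v \<in> ends ep e} = 1)"

definition three_array :: "'v set \<Rightarrow> 'e set \<Rightarrow> ('e \<Rightarrow> 'v \<times> 'v) \<Rightarrow> 'e set \<times> 'e set \<times> 'e set \<Rightarrow> bool" where
  "three_array V E ep A \<longleftrightarrow> (case A of (M1, M2, M3) \<Rightarrow>
     perfect_matching V E ep M1 \<and> perfect_matching V E ep M2 \<and> perfect_matching V E ep M3 \<and>
     M1 \<noteq> M2 \<and> M1 \<noteq> M3 \<and> M2 \<noteq> M3)"

definition cover_count :: "'e set \<times> 'e set \<times> 'e set \<Rightarrow> 'e \<Rightarrow> nat" where
  "cover_count A e = (case A of (M1, M2, M3) \<Rightarrow>
     (if e \<in> M1 then 1 else 0) + (if e \<in> M2 then 1 else 0) + (if e \<in> M3 then 1 else 0))"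

definition uncovered :: "'e set \<Rightarrow> 'e set \<times> 'e set \<times> 'e set \<Rightarrow> 'e set" where
  "uncovered E A = {e\<in>E. cover_count A e = 0}"

definition colouring_defect :: "'v set \<Rightarrow> 'e set \<Rightarrow> ('e \<Rightarrow> 'v \<times> 'v) \<Rightarrow> nat" where
  "colouring_defect V E ep = Min {card (uncovered E A) | A. three_array V E ep A}"

definition optimal_array :: "'v set \<Rightarrow> 'e set \<Rightarrow> ('e \<Rightarrow> 'v \<times> 'v) \<Rightarrow> 'e set \<times> 'e set \<times> 'e set \<Rightarrow> bool" where
  "optimal_array V E ep A \<longleftrightarrow> three_array V E ep A \<and>
     card (uncovered E A) = colouring_defect V E ep"

definition core :: "'e set \<Rightarrow> 'e set \<times> 'e set \<times> 'e set \<Rightarrow> 'e set" where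
  "core E A = {e\<in>E. cover_count A e \<noteq> 1}"

definition induced_hexagon_on :: "'v set \<Rightarrow> 'e set \<Rightarrow> ('e \<Rightarrow> 'v \<times> 'v) \<Rightarrow> 'e set \<Rightarrow> (nat \<Rightarrow> 'v) \<Rightarrow> bool" where
  "induced_hexagon_on V E ep C vs \<longleftrightarrow>
     inj_on vs {..<6} \<and> vs ` {..<6} \<subseteq> V \<and>
     (\<forall>i<6. card {e\<in>E. ends ep e = {vs i, vs (Suc i mod 6)}} = 1) \<and>
     (\<forall>e\<in>E. ends ep e \<subseteq> vs ` {..<6} \<longrightarrow> (\<exists>i<6. ends ep e = {vs i, vs (Suc i mod 6)})) \<and>
     C = {e\<in>E. \<exists>i<6. ends ep e = {vs i, vs (Suc i mod 6)}}"

definition triangle :: "'v set \<Rightarrow> 'e set \<Rightarrow> ('e \<Rightarrow> 'v \<times> 'v) \<Rightarrow> 'v set \<Rightarrow> bool" where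
  "triangle V E ep T \<longleftrightarrow> (\<exists>a b c. T = {a, b, c} \<and> a \<noteq> b \<and> b \<noteq> c \<and> a \<noteq> c \<and>
     (\<exists>e\<in>E. ends ep e = {a, b}) \<and> (\<exists>e\<in>E. ends ep e = {b, c}) \<and> (\<exists>e\<in>E. ends ep e = {a, c}))"

definition perfect_matching_index :: "'v set \<Rightarrow> 'e set \<Rightarrow> ('e \<Rightarrow> 'v \<times> 'v) \<Rightarrow> nat" where
  "perfect_matching_index V E ep = (LEAST k. \<exists>F. finite F \<and> card F = k \<and>
     (\<forall>M\<in>F. perfect_matching V E ep M) \<and> \<Union>F = E)"

end

theory Submission
  imports Defs "HOL-Combinatorics.Transposition"
begin

text \<open>Let \<open>M1, M2, M3\<close> be an optimal array whose core is the hexagon \<open>h0 \<dots> h5\<close>, and let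
  \<open>h0 h1 w\<close> be a triangle on it. All other edges are simply covered, so the array is a proper
  3-edge-colouring of them, and the triangle forces the alternate hexagon edges \<open>e0, e2, e4\<close> to be
  the uncovered ones. Any perfect matching through \<open>e0, e2, e4\<close> is then a fourth matching covering
  the graph. Such a matching is a colour class of a colouring of the outer edges avoiding the colours
  of the four spokes; starting from the array colouring, at most two Kempe switches produce one,
  because every other outcome extends to a 3-edge-colouring of the snark. Since the snark is not
  3-edge-colourable, three perfect matchings never suffice, so \<open>\<pi> = 4\<close>.\<close>

section \<open>Two involutions and their orbits\<close>

lemma funpow_returns:
  assumes "inj f" and "finite (range (\<lambda>k. (f ^^ k) x))"
  shows "\<exists>m>0. (f ^^ m) x = x"
proof -
  have "\<not> inj (\<lambda>k. (f ^^ k) x)"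
    using assms(2) finite_imageD infinite_UNIV_nat by blast
  then obtain i j where "i < j" and eq: "(f ^^ i) x = (f ^^ j) x"
    unfolding inj_def by (metis nat_neq_iff)
  then have "(f ^^ i) ((f ^^ (j - i)) x) = (f ^^ i) x"
    by (metis add_diff_inverse_nat funpow_add less_imp_not_less o_apply)
  then have "(f ^^ (j - i)) x = x"
    using inj_fn[OF assms(1)] by (meson injD)
  with \<open>i < j\<close> show ?thesis by (metis zero_less_diff)
qed

lemma funpow_period:
  assumes "inj f" and "finite (range (\<lambda>k. (f ^^ k) x))"
  obtains n where "n > 0" "\<And>k. (f ^^ k) x = x \<longleftrightarrow> n dvd k"
proof -
  define n where "n = (LEAST m. m > 0 \<and> (f ^^ m) x = x)"
  have n: "n > 0" "(f ^^ n) x = x"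
    using LeastI_ex[OF funpow_returns[OF assms]] unfolding n_def by auto
  have least: "(f ^^ m) x \<noteq> x" if "0 < m" "m < n" for m
    using not_less_Least[of m "\<lambda>m. m > 0 \<and> (f ^^ m) x = x"] that unfolding n_def by blast
  have "(f ^^ k) x = x \<longleftrightarrow> (f ^^ (k mod n)) x = x" for k
    using funpow_mod_eq[OF n(2)] by simp
  also have "\<dots> k \<longleftrightarrow> k mod n = 0" for k
    using least[of "k mod n"] n(1) by auto
  finally have "(f ^^ k) x = x \<longleftrightarrow> n dvd k" for k by (simp add: dvd_eq_mod_eq_0)
  then show thesis using that n(1) by blast
qed

lemma dvd_less_double:
  fixes j n :: nat
  assumes "n dvd j" and "j < 2 * n"
  shows "j = 0 \<or> j = n"
proof -
  obtain t where "j = n * t" using assms(1) by blast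
  with assms(2) have "t < 2" by (metis mult.commute mult_less_cancel1)
  then show ?thesis using \<open>j = n * t\<close> by (auto simp: less_2_cases_iff)
qed

lemma half_period_cases:
  fixes k n :: nat
  assumes "k < n" and "n dvd 2 * k \<or> n dvd 2 * k + 1"
  shows "k = 0 \<or> k = n div 2"
proof -
  have "2 * k = 0 \<or> 2 * k = n \<or> 2 * k + 1 = 0 \<or> 2 * k + 1 = n"
    using assms dvd_less_double[of n "2 * k"] dvd_less_double[of n "2 * k + 1"] by linarith
  then show ?thesis by auto
qed

text \<open>For the rotation \<open>s = Y \<circ> X\<close> of the dihedral group generated by two involutions, both
  reflections conjugate \<open>s\<close> into its inverse.\<close>
lemma funpow_reflect:
  assumes "\<And>u. s (Z (s u)) = Z u"
  shows "(s ^^ k) (Z ((s ^^ k) u)) = Z u"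
proof (induction k)
  case (Suc k)
  have "(s ^^ Suc k) (Z ((s ^^ Suc k) u)) = (s ^^ k) (s (Z (s ((s ^^ k) u))))"
    by (simp add: funpow_swap1)
  also have "\<dots> = Z u" using assms Suc.IH by simp
  finally show ?case .
qed simp

lemma dihedral_orbit:
  assumes s: "s = Y \<circ> X" and XX: "\<And>v. X (X v) = v" and YY: "\<And>v. Y (Y v) = v" and Yp: "Y p = p"
    and "n > 0" and period: "\<And>k. (s ^^ k) p = p \<longleftrightarrow> n dvd k"
  shows "Y ((s ^^ k) p) = (s ^^ k) p \<longleftrightarrow> n dvd 2 * k"
    and "X ((s ^^ k) p) = (s ^^ k) p \<longleftrightarrow> n dvd 2 * k + 1"
    and "Y ((s ^^ k) p) \<in> range (\<lambda>k. (s ^^ k) p)"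
    and "X ((s ^^ k) p) \<in> range (\<lambda>k. (s ^^ k) p)"
proof -
  have "inj s" unfolding s by (metis XX YY injI o_apply)
  then have cancel: "(s ^^ k) u = (s ^^ k) v \<longleftrightarrow> u = v" for k u v
    by (meson inj_fn injD)
  have reflY: "(s ^^ k) (Y ((s ^^ k) p)) = p" and reflX: "(s ^^ Suc k) (X ((s ^^ k) p)) = p" for k
    using funpow_reflect[of s Y k p] funpow_reflect[of s X k p] XX YY Yp by (simp_all add: s)
  have twice: "(s ^^ k) ((s ^^ k) u) = (s ^^ (k + k)) u" for k u
    by (simp only: funpow_add o_apply)
  show "Y ((s ^^ k) p) = (s ^^ k) p \<longleftrightarrow> n dvd 2 * k"
    using cancel[of k "Y ((s ^^ k) p)" "(s ^^ k) p"] reflY[of k] period[of "k + k"] twice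
    by (auto simp: mult_2)
  show "X ((s ^^ k) p) = (s ^^ k) p \<longleftrightarrow> n dvd 2 * k + 1"
    using cancel[of "Suc k" "X ((s ^^ k) p)" "(s ^^ k) p"] reflX[of k] period[of "Suc (k + k)"] twice
    by (auto simp: mult_2)
  have rewind: "(s ^^ k) ((s ^^ (n * k - k)) p) = p" for k
    using period[of "n * k"] \<open>n > 0\<close> by (simp add: funpow_add[symmetric, THEN fun_cong, simplified])
  show "Y ((s ^^ k) p) \<in> range (\<lambda>k. (s ^^ k) p)"
    using reflY[of k] rewind[of k] cancel[of k] by (metis rangeI)
  show "X ((s ^^ k) p) \<in> range (\<lambda>k. (s ^^ k) p)"
    using reflX[of k] rewind[of "Suc k"] cancel[of "Suc k"] by (metis rangeI)
qed

text \<open>The orbit of \<open>p\<close> is a path with ends \<open>p\<close> and \<open>q\<close>.\<close>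
lemma involutions_orbit_path:
  fixes X Y :: "'a \<Rightarrow> 'a"
  assumes XX: "\<And>v. X (X v) = v" and YY: "\<And>v. Y (Y v) = v"
    and Yp: "Y p = p" and Xp: "X p \<noteq> p"
    and "finite S" and closed: "\<forall>v\<in>S. X v \<in> S \<and> Y v \<in> S" and "p \<in> S"
  obtains Ob q where "p \<in> Ob" "q \<in> Ob" "q \<noteq> p" "X q = q \<or> Y q = q" "\<not> (X q = q \<and> Y q = q)"
    "\<forall>v\<in>Ob. X v \<in> Ob \<and> Y v \<in> Ob" "\<forall>v\<in>Ob. X v = v \<or> Y v = v \<longrightarrow> v = p \<or> v = q"
proof -
  define s where "s = Y \<circ> X"
  have "inj s" unfolding s_def by (metis XX YY injI o_apply)
  have "(s ^^ k) p \<in> S" for k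
    by (induction k) (auto simp: s_def closed \<open>p \<in> S\<close>)
  then have "finite (range (\<lambda>k. (s ^^ k) p))"
    using \<open>finite S\<close> by (meson finite_subset image_subsetI)
  then obtain n where "n > 0" and period: "\<And>k. (s ^^ k) p = p \<longleftrightarrow> n dvd k"
    using funpow_period[OF \<open>inj s\<close>] by blast
  note orbit = dihedral_orbit[OF s_def XX YY Yp \<open>n > 0\<close> period]
  define Ob where "Ob = range (\<lambda>k. (s ^^ k) p)"
  have closed_Ob: "\<forall>v\<in>Ob. X v \<in> Ob \<and> Y v \<in> Ob"
    unfolding Ob_def using orbit(3,4) by blast
  define q where "q = (s ^^ (n div 2)) p"
  have "s p \<noteq> p" using Xp Yp YY by (metis comp_apply s_def)
  then have "n \<ge> 2" using period[of 1] \<open>n > 0\<close> by (auto simp: less_2_cases_iff)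
  then have "q \<noteq> p" unfolding q_def period by (simp add: nat_dvd_not_less)
  have q_fixed: "X q = q \<or> Y q = q"
    unfolding q_def orbit(1,2) by (cases "even n") (auto elim: oddE)
  have q_not_fixed: "\<not> (X q = q \<and> Y q = q)"
  proof
    assume "X q = q \<and> Y q = q"
    then have "s q = q" by (simp add: s_def)
    then have "(s ^^ (n div 2)) (s p) = (s ^^ (n div 2)) p"
      unfolding q_def by (simp add: funpow_swap1)
    then show False using \<open>inj s\<close> \<open>s p \<noteq> p\<close> by (meson inj_fn injD)
  qed
  have only: "\<forall>v\<in>Ob. X v = v \<or> Y v = v \<longrightarrow> v = p \<or> v = q"
  proof (intro ballI impI)
    fix v assume "v \<in> Ob" "X v = v \<or> Y v = v"
    obtain k where "v = (s ^^ k) p" using \<open>v \<in> Ob\<close> unfolding Ob_def by blast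
    moreover have "(s ^^ n) p = p" using period by simp
    ultimately have v: "v = (s ^^ (k mod n)) p" using funpow_mod_eq by metis
    then have "k mod n = 0 \<or> k mod n = n div 2"
      using half_period_cases[of "k mod n" n] \<open>X v = v \<or> Y v = v\<close> orbit(1,2) \<open>n > 0\<close> by auto
    then show "v = p \<or> v = q" using v q_def by auto
  qed
  have "p \<in> Ob" "q \<in> Ob" unfolding Ob_def q_def by (metis funpow_0 rangeI)+
  then show thesis by (rule that[OF _ _ \<open>q \<noteq> p\<close> q_fixed q_not_fixed closed_Ob only])
qed

section \<open>Kempe chains in partial edge colourings\<close>

definition other_end :: "('e \<Rightarrow> 'v \<times> 'v) \<Rightarrow> 'e \<Rightarrow> 'v \<Rightarrow> 'v" where
  "other_end ep e v = (if fst (ep e) = v then snd (ep e) else fst (ep e))"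

lemma other_end_in_ends: "other_end ep e v \<in> ends ep e"
  unfolding ends_def other_end_def by auto

lemma ends_eq_other_end: "v \<in> ends ep e \<Longrightarrow> ends ep e = {v, other_end ep e v}"
  unfolding ends_def other_end_def by auto

lemma other_end_other_end: "v \<in> ends ep e \<Longrightarrow> other_end ep e (other_end ep e v) = v"
  unfolding ends_def other_end_def by auto

lemma other_end_neq: "\<not> is_loop ep e \<Longrightarrow> v \<in> ends ep e \<Longrightarrow> other_end ep e v \<noteq> v"
  unfolding ends_def other_end_def is_loop_def by auto

definition proper_colouring_on :: "'e set \<Rightarrow> ('e \<Rightarrow> 'v \<times> 'v) \<Rightarrow> ('e \<Rightarrow> nat) \<Rightarrow> bool" where
  "proper_colouring_on F ep c \<longleftrightarrow>
     (\<forall>e\<in>F. \<forall>f\<in>F. e \<noteq> f \<and> ends ep e \<inter> ends ep f \<noteq> {} \<longrightarrow> c e \<noteq> c f)"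

definition coloured_at :: "'e set \<Rightarrow> ('e \<Rightarrow> 'v \<times> 'v) \<Rightarrow> ('e \<Rightarrow> nat) \<Rightarrow> nat \<Rightarrow> 'v \<Rightarrow> bool" where
  "coloured_at F ep c k v \<longleftrightarrow> (\<exists>e\<in>F. c e = k \<and> v \<in> ends ep e)"

text \<open>For a proper colouring \<open>colour_step F ep c k\<close> is an involution, and the Kempe chains of
  colours \<open>a\<close>, \<open>b\<close> are the orbits of the pair of involutions for \<open>a\<close> and \<open>b\<close>.\<close>
definition colour_step :: "'e set \<Rightarrow> ('e \<Rightarrow> 'v \<times> 'v) \<Rightarrow> ('e \<Rightarrow> nat) \<Rightarrow> nat \<Rightarrow> 'v \<Rightarrow> 'v" where
  "colour_step F ep c k v =
     (if coloured_at F ep c k v then other_end ep (SOME e. e \<in> F \<and> c e = k \<and> v \<in> ends ep e) v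
      else v)"

definition kempe_end :: "'e set \<Rightarrow> ('e \<Rightarrow> 'v \<times> 'v) \<Rightarrow> ('e \<Rightarrow> nat) \<Rightarrow> nat \<Rightarrow> nat \<Rightarrow> 'v \<Rightarrow> bool" where
  "kempe_end F ep c a b v \<longleftrightarrow> coloured_at F ep c a v \<noteq> coloured_at F ep c b v"

lemma proper_colouring_onD:
  assumes "proper_colouring_on F ep c" "e \<in> F" "f \<in> F" "c e = c f" "v \<in> ends ep e" "v \<in> ends ep f"
  shows "e = f"
  using assms unfolding proper_colouring_on_def by blast

lemma colour_step_eq:
  assumes "proper_colouring_on F ep c" "e \<in> F" "v \<in> ends ep e"
  shows "colour_step F ep c (c e) v = other_end ep e v"
proof -
  have "(SOME e'. e' \<in> F \<and> c e' = c e \<and> v \<in> ends ep e') = e"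
  proof (rule some_equality)
    show "e \<in> F \<and> c e = c e \<and> v \<in> ends ep e" using assms(2,3) by simp
    show "e' = e" if "e' \<in> F \<and> c e' = c e \<and> v \<in> ends ep e'" for e'
      using proper_colouring_onD[OF assms(1)] assms(2,3) that by blast
  qed
  moreover have "coloured_at F ep c (c e) v"
    unfolding coloured_at_def using assms(2,3) by blast
  ultimately show ?thesis by (simp add: colour_step_def)
qed

lemma colour_step_involution:
  assumes "proper_colouring_on F ep c"
  shows "colour_step F ep c k (colour_step F ep c k v) = v"
proof (cases "coloured_at F ep c k v")
  case True
  then obtain e where e: "e \<in> F" "c e = k" "v \<in> ends ep e" unfolding coloured_at_def by blast
  have "colour_step F ep c k v = other_end ep e v"
    using colour_step_eq[OF assms e(1,3)] e(2) by simp
  moreover have "colour_step F ep c k (other_end ep e v) = other_end ep e (other_end ep e v)"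
    using colour_step_eq[OF assms e(1) other_end_in_ends] e(2) by simp
  ultimately show ?thesis using other_end_other_end[OF e(3)] by simp
qed (simp add: colour_step_def)

lemma colour_step_fixed_iff:
  assumes "proper_colouring_on F ep c" and "\<forall>e\<in>F. \<not> is_loop ep e"
  shows "colour_step F ep c k v = v \<longleftrightarrow> \<not> coloured_at F ep c k v"
proof (cases "coloured_at F ep c k v")
  case True
  then obtain e where e: "e \<in> F" "c e = k" "v \<in> ends ep e" unfolding coloured_at_def by blast
  have "colour_step F ep c k v = other_end ep e v"
    using colour_step_eq[OF assms(1) e(1,3)] e(2) by simp
  then show ?thesis using other_end_neq[OF _ e(3)] assms(2) e(1) True by simp
qed (simp add: colour_step_def)

lemma colour_step_in_vertices:
  assumes "proper_colouring_on F ep c" and "v \<in> insert p (\<Union>e\<in>F. ends ep e)"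
  shows "colour_step F ep c k v \<in> insert p (\<Union>e\<in>F. ends ep e)"
proof (cases "coloured_at F ep c k v")
  case True
  then obtain e where e: "e \<in> F" "c e = k" "v \<in> ends ep e" unfolding coloured_at_def by blast
  have "colour_step F ep c k v = other_end ep e v"
    using colour_step_eq[OF assms(1) e(1,3)] e(2) by simp
  moreover have "other_end ep e v \<in> (\<Union>e\<in>F. ends ep e)"
    using other_end_in_ends e(1) by (rule UN_I[rotated])
  ultimately show ?thesis by simp
next
  case False
  then have "colour_step F ep c k v = v" unfolding colour_step_def by simp
  then show ?thesis using assms(2) by simp
qed

lemma kempe_switch:
  assumes "finite F" and loopless: "\<forall>e\<in>F. \<not> is_loop ep e" and proper: "proper_colouring_on F ep c"
    and pa: "coloured_at F ep c a p" and pb: "\<not> coloured_at F ep c b p"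
  obtains c' Ob q where "proper_colouring_on F ep c'"
    "\<forall>e\<in>F. \<forall>v\<in>ends ep e. c' e = (if v \<in> Ob then transpose a b (c e) else c e)"
    "p \<in> Ob" "q \<in> Ob" "q \<noteq> p" "kempe_end F ep c a b q"
    "\<forall>v\<in>Ob. kempe_end F ep c a b v \<longrightarrow> v = p \<or> v = q"
proof -
  let ?X = "colour_step F ep c a" and ?Y = "colour_step F ep c b"
  let ?S = "insert p (\<Union>e\<in>F. ends ep e)"
  have "finite ?S" unfolding ends_def using \<open>finite F\<close> by auto
  have XX: "\<And>v. ?X (?X v) = v" and YY: "\<And>v. ?Y (?Y v) = v"
    using colour_step_involution[OF proper] by blast+
  have Yp: "?Y p = p" and Xp: "?X p \<noteq> p"
    using colour_step_fixed_iff[OF proper loopless] pa pb by blast+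
  have S_closed: "\<forall>v\<in>?S. ?X v \<in> ?S \<and> ?Y v \<in> ?S"
    using colour_step_in_vertices[OF proper] by blast
  have "p \<in> ?S" by simp
  obtain Ob q where Ob: "p \<in> Ob" "q \<in> Ob" "q \<noteq> p" "?X q = q \<or> ?Y q = q"
      "\<not> (?X q = q \<and> ?Y q = q)"
    and closed: "\<forall>v\<in>Ob. ?X v \<in> Ob \<and> ?Y v \<in> Ob"
    and only: "\<forall>v\<in>Ob. ?X v = v \<or> ?Y v = v \<longrightarrow> v = p \<or> v = q"
    by (rule involutions_orbit_path[of ?X ?Y p ?S, OF XX YY Yp Xp \<open>finite ?S\<close> S_closed \<open>p \<in> ?S\<close>])
  have step_closed: "v \<in> Ob"
    if "e \<in> F" "c e \<in> {a, b}" "u \<in> ends ep e" "v \<in> ends ep e" "u \<in> Ob" for e u v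
  proof -
    have "?X u \<in> Ob" "?Y u \<in> Ob" using closed that(5) by blast+
    then have "colour_step F ep c (c e) u \<in> Ob" using that(2) by auto
    then have "other_end ep e u \<in> Ob" using colour_step_eq[OF proper that(1,3)] by simp
    moreover have "v = u \<or> v = other_end ep e u"
      using ends_eq_other_end[OF that(3)] that(4) by auto
    ultimately show ?thesis using that(5) by auto
  qed
  have same_side: "u \<in> Ob \<longleftrightarrow> v \<in> Ob"
    if "e \<in> F" "c e \<in> {a, b}" "u \<in> ends ep e" "v \<in> ends ep e" for e u v
    using step_closed[OF that] step_closed[OF that(1,2,4,3)] by blast
  define c' where "c' e = (if fst (ep e) \<in> Ob then transpose a b (c e) else c e)" for e
  have c': "c' e = (if v \<in> Ob then transpose a b (c e) else c e)" if "e \<in> F" "v \<in> ends ep e" for e v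
  proof (cases "c e \<in> {a, b}")
    case True
    have "fst (ep e) \<in> ends ep e" unfolding ends_def by simp
    then have "fst (ep e) \<in> Ob \<longleftrightarrow> v \<in> Ob" using same_side[OF that(1) True _ that(2)] by blast
    then show ?thesis by (simp add: c'_def)
  next
    case False
    then show ?thesis by (simp add: c'_def)
  qed
  have proper': "proper_colouring_on F ep c'"
    unfolding proper_colouring_on_def
  proof (intro ballI impI)
    fix e f assume ef: "e \<in> F" "f \<in> F" "e \<noteq> f \<and> ends ep e \<inter> ends ep f \<noteq> {}"
    then obtain v where v: "v \<in> ends ep e" "v \<in> ends ep f" by blast
    have "c e \<noteq> c f" using proper ef unfolding proper_colouring_on_def by blast
    then show "c' e \<noteq> c' f"
      using c'[OF ef(1) v(1)] c'[OF ef(2) v(2)] by (auto dest: transpose_eq_imp_eq)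
  qed
  have end_iff: "kempe_end F ep c a b v \<longleftrightarrow> (?X v = v \<or> ?Y v = v) \<and> \<not> (?X v = v \<and> ?Y v = v)" for v
    unfolding kempe_end_def using colour_step_fixed_iff[OF proper loopless] by blast
  have "kempe_end F ep c a b q" using end_iff Ob(4,5) by blast
  moreover have "\<forall>v\<in>Ob. kempe_end F ep c a b v \<longrightarrow> v = p \<or> v = q" using end_iff only by blast
  moreover have "\<forall>e\<in>F. \<forall>v\<in>ends ep e. c' e = (if v \<in> Ob then transpose a b (c e) else c e)"
    using c' by blast
  ultimately show thesis using that[OF proper' _ Ob(1,2,3)] by blast
qed

section \<open>A hexagonal core next to a triangle\<close>

definition exactly_one :: "bool \<Rightarrow> bool \<Rightarrow> bool \<Rightarrow> bool" where
  "exactly_one a b c \<longleftrightarrow> (a \<and> \<not> b \<and> \<not> c) \<or> (\<not> a \<and> b \<and> \<not> c) \<or> (\<not> a \<and> \<not> b \<and> c)"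

lemma cover_count_eq_1_iff:
  "cover_count (M1, M2, M3) e = 1 \<longleftrightarrow> exactly_one (e \<in> M1) (e \<in> M2) (e \<in> M3)"
  unfolding cover_count_def exactly_one_def by auto

lemma perfect_matching_exactly_one:
  assumes "perfect_matching V E ep M" "v \<in> V" "{e\<in>E. v \<in> ends ep e} = {a, b, c}"
    "a \<noteq> b" "a \<noteq> c" "b \<noteq> c"
  shows "exactly_one (a \<in> M) (b \<in> M) (c \<in> M)"
proof -
  have "M \<subseteq> E" "card {e\<in>M. v \<in> ends ep e} = 1"
    using assms(1,2) unfolding perfect_matching_def by auto
  moreover have "{e\<in>M. v \<in> ends ep e} = M \<inter> {a, b, c}" using \<open>M \<subseteq> E\<close> assms(3) by blast
  ultimately have "card (M \<inter> {a, b, c}) = 1" by simp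
  then show ?thesis using assms(4-6) unfolding exactly_one_def
    by (cases "a \<in> M"; cases "b \<in> M"; cases "c \<in> M") (auto simp: card_insert_if)
qed

lemma perfect_matching_unique:
  assumes "perfect_matching V E ep M" "v \<in> V" "e \<in> M" "f \<in> M" "v \<in> ends ep e" "v \<in> ends ep f"
  shows "e = f"
proof -
  have "card {e\<in>M. v \<in> ends ep e} = 1" using assms(1,2) unfolding perfect_matching_def by simp
  then obtain x where x: "{e\<in>M. v \<in> ends ep e} = {x}" by (rule card_1_singletonE)
  have "e \<in> {x}" "f \<in> {x}" unfolding x[symmetric] using assms(3-6) by auto
  then show ?thesis by simp
qed

lemma three_colours_all_used:
  assumes "finite I" "card I = 3" "inj_on c I" "\<forall>e\<in>I. c e < (3::nat)" "k < 3"
  shows "\<exists>e\<in>I. c e = k"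
proof -
  have "card (c ` I) = 3" using card_image[OF assms(3)] assms(2) by simp
  moreover have "c ` I \<subseteq> {0, 1, 2}" using assms(4) by auto
  ultimately have "c ` I = {0, 1, 2}" by (intro card_subset_eq) auto
  moreover have "k \<in> {0, 1, 2}" using assms(5) by (simp add: less_Suc_eq numeral_3_eq_3 numeral_2_eq_2)
  ultimately show ?thesis by (metis imageE)
qed

locale hexagon_triangle =
  fixes V :: "'v set" and E :: "'e set" and ep :: "'e \<Rightarrow> 'v \<times> 'v" and M1 M2 M3 :: "'e set"
    and h0 h1 h2 h3 h4 h5 w :: 'v and e0 e1 e2 e3 e4 e5 f0 f1 f2 f3 f4 f5 g :: 'e
  assumes finite_E: "finite E"
    and ends_in_V: "\<forall>e\<in>E. fst (ep e) \<in> V \<and> snd (ep e) \<in> V"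
    and loopless: "\<forall>e\<in>E. \<not> is_loop ep e"
    and incident_3: "\<forall>v\<in>V. card {e\<in>E. v \<in> ends ep e} = 3"
    and M1: "perfect_matching V E ep M1" and M2: "perfect_matching V E ep M2"
    and M3: "perfect_matching V E ep M3"
    and not_colourable: "\<not> three_edge_colourable E ep"
    and distinct_vertices: "distinct [h0, h1, h2, h3, h4, h5, w]"
    and in_V: "h0 \<in> V" "h1 \<in> V" "h2 \<in> V" "h3 \<in> V" "h4 \<in> V" "h5 \<in> V" "w \<in> V"
    and ends: "ends ep e0 = {h0, h1}" "ends ep e1 = {h1, h2}" "ends ep e2 = {h2, h3}"
      "ends ep e3 = {h3, h4}" "ends ep e4 = {h4, h5}" "ends ep e5 = {h5, h0}"
      "ends ep f0 = {h0, w}" "ends ep f1 = {h1, w}"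
    and incident: "{e\<in>E. h0 \<in> ends ep e} = {e0, e5, f0}" "{e\<in>E. h1 \<in> ends ep e} = {e0, e1, f1}"
      "{e\<in>E. h2 \<in> ends ep e} = {e1, e2, f2}" "{e\<in>E. h3 \<in> ends ep e} = {e2, e3, f3}"
      "{e\<in>E. h4 \<in> ends ep e} = {e3, e4, f4}" "{e\<in>E. h5 \<in> ends ep e} = {e4, e5, f5}"
      "{e\<in>E. w \<in> ends ep e} = {f0, f1, g}"
    and third_edges: "f2 \<notin> {e1, e2}" "f3 \<notin> {e2, e3}" "f4 \<notin> {e3, e4}" "f5 \<notin> {e4, e5}" "g \<notin> {f0, f1}"
    and core: "\<forall>e\<in>E. cover_count (M1, M2, M3) e \<noteq> 1 \<longleftrightarrow> e \<in> {e0, e1, e2, e3, e4, e5}"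
begin

lemma vertices_distinct:
  "h0 \<noteq> h1" "h0 \<noteq> h2" "h0 \<noteq> h3" "h0 \<noteq> h4" "h0 \<noteq> h5" "h0 \<noteq> w"
  "h1 \<noteq> h2" "h1 \<noteq> h3" "h1 \<noteq> h4" "h1 \<noteq> h5" "h1 \<noteq> w"
  "h2 \<noteq> h3" "h2 \<noteq> h4" "h2 \<noteq> h5" "h2 \<noteq> w"
  "h3 \<noteq> h4" "h3 \<noteq> h5" "h3 \<noteq> w" "h4 \<noteq> h5" "h4 \<noteq> w" "h5 \<noteq> w"
  using distinct_vertices by auto

lemma edges_in_E:
  "e0 \<in> E" "e1 \<in> E" "e2 \<in> E" "e3 \<in> E" "e4 \<in> E" "e5 \<in> E"
  "f0 \<in> E" "f1 \<in> E" "f2 \<in> E" "f3 \<in> E" "f4 \<in> E" "f5 \<in> E" "g \<in> E"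
  using incident by blast+

lemma third_edges_incident:
  "h2 \<in> ends ep f2" "h3 \<in> ends ep f3" "h4 \<in> ends ep f4" "h5 \<in> ends ep f5" "w \<in> ends ep g"
  using incident by blast+

lemma edges_distinct:
  "e0 \<noteq> e1" "e0 \<noteq> e2" "e0 \<noteq> e3" "e0 \<noteq> e4" "e0 \<noteq> e5"
  "e1 \<noteq> e2" "e1 \<noteq> e3" "e1 \<noteq> e4" "e1 \<noteq> e5" "e2 \<noteq> e3" "e2 \<noteq> e4" "e2 \<noteq> e5"
  "e3 \<noteq> e4" "e3 \<noteq> e5" "e4 \<noteq> e5" "f0 \<noteq> f1"
  "f0 \<notin> {e0, e1, e2, e3, e4, e5}" "f1 \<notin> {e0, e1, e2, e3, e4, e5}"
  using ends vertices_distinct by (auto simp: doubleton_eq_iff)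

definition outer :: "'e set" where
  "outer = E - {e0, e1, e2, e3, e4, e5, f0, f1}"

lemma outer_subset: "outer \<subseteq> E"
  unfolding outer_def by auto

lemma finite_outer: "finite outer"
  unfolding outer_def using finite_E by simp

lemma outer_loopless: "\<forall>e\<in>outer. \<not> is_loop ep e"
  unfolding outer_def using loopless by simp

lemma third_edges_outer: "f2 \<in> outer" "f3 \<in> outer" "f4 \<in> outer" "f5 \<in> outer" "g \<in> outer"
proof -
  have "f \<notin> {e0, e1, e2, e3, e4, e5, f0, f1}" if "f \<in> {f2, f3, f4, f5, g}" for f
    using that ends vertices_distinct third_edges third_edges_incident
    by (auto simp: doubleton_eq_iff)
  then show "f2 \<in> outer" "f3 \<in> outer" "f4 \<in> outer" "f5 \<in> outer" "g \<in> outer"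
    using edges_in_E unfolding outer_def by auto
qed

lemma outer_incident:
  "{e\<in>outer. h0 \<in> ends ep e} = {}" "{e\<in>outer. h1 \<in> ends ep e} = {}"
  "{e\<in>outer. h2 \<in> ends ep e} = {f2}" "{e\<in>outer. h3 \<in> ends ep e} = {f3}"
  "{e\<in>outer. h4 \<in> ends ep e} = {f4}" "{e\<in>outer. h5 \<in> ends ep e} = {f5}"
  "{e\<in>outer. w \<in> ends ep e} = {g}"
  using incident third_edges_outer unfolding outer_def by auto

lemma outer_incident_other:
  assumes "v \<notin> {h0, h1, h2, h3, h4, h5, w}"
  shows "{e\<in>outer. v \<in> ends ep e} = {e\<in>E. v \<in> ends ep e}"
  using assms ends unfolding outer_def by auto

lemma matching_at_vertices:
  assumes "perfect_matching V E ep M"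
  shows "exactly_one (e0 \<in> M) (e5 \<in> M) (f0 \<in> M)" "exactly_one (e0 \<in> M) (e1 \<in> M) (f1 \<in> M)"
    "exactly_one (e1 \<in> M) (e2 \<in> M) (f2 \<in> M)" "exactly_one (e2 \<in> M) (e3 \<in> M) (f3 \<in> M)"
    "exactly_one (e3 \<in> M) (e4 \<in> M) (f4 \<in> M)" "exactly_one (e4 \<in> M) (e5 \<in> M) (f5 \<in> M)"
    "exactly_one (f0 \<in> M) (f1 \<in> M) (g \<in> M)"
  using perfect_matching_exactly_one[OF assms in_V(1) incident(1)]
    perfect_matching_exactly_one[OF assms in_V(2) incident(2)]
    perfect_matching_exactly_one[OF assms in_V(3) incident(3)]
    perfect_matching_exactly_one[OF assms in_V(4) incident(4)]
    perfect_matching_exactly_one[OF assms in_V(5) incident(5)]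
    perfect_matching_exactly_one[OF assms in_V(6) incident(6)]
    perfect_matching_exactly_one[OF assms in_V(7) incident(7)]
    edges_distinct third_edges_outer third_edges unfolding outer_def by auto

lemma simply_covered:
  "exactly_one (f0 \<in> M1) (f0 \<in> M2) (f0 \<in> M3)" "exactly_one (f1 \<in> M1) (f1 \<in> M2) (f1 \<in> M3)"
  "exactly_one (f2 \<in> M1) (f2 \<in> M2) (f2 \<in> M3)" "exactly_one (f3 \<in> M1) (f3 \<in> M2) (f3 \<in> M3)"
  "exactly_one (f4 \<in> M1) (f4 \<in> M2) (f4 \<in> M3)" "exactly_one (f5 \<in> M1) (f5 \<in> M2) (f5 \<in> M3)"
  "exactly_one (g \<in> M1) (g \<in> M2) (g \<in> M3)"
  "\<not> exactly_one (e0 \<in> M1) (e0 \<in> M2) (e0 \<in> M3)" "\<not> exactly_one (e1 \<in> M1) (e1 \<in> M2) (e1 \<in> M3)"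
  "\<not> exactly_one (e2 \<in> M1) (e2 \<in> M2) (e2 \<in> M3)" "\<not> exactly_one (e3 \<in> M1) (e3 \<in> M2) (e3 \<in> M3)"
  "\<not> exactly_one (e4 \<in> M1) (e4 \<in> M2) (e4 \<in> M3)" "\<not> exactly_one (e5 \<in> M1) (e5 \<in> M2) (e5 \<in> M3)"
  using core edges_in_E edges_distinct third_edges_outer
  unfolding cover_count_eq_1_iff[symmetric] outer_def by auto

text \<open>The triangle forces \<open>e0\<close> to be uncovered: otherwise it lies in two matchings, and the third
  one contains both \<open>f0\<close> and \<open>f1\<close>. Around the hexagon the uncovered and the doubly covered
  edges then alternate, and the three matchings agree on opposite spokes.\<close>
lemma cover_pattern:
  "e0 \<notin> M1" "e0 \<notin> M2" "e0 \<notin> M3" "e2 \<notin> M1" "e2 \<notin> M2" "e2 \<notin> M3"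
  "e4 \<notin> M1" "e4 \<notin> M2" "e4 \<notin> M3"
  "e1 \<in> M1 \<or> e1 \<in> M2 \<or> e1 \<in> M3" "e3 \<in> M1 \<or> e3 \<in> M2 \<or> e3 \<in> M3"
  "e5 \<in> M1 \<or> e5 \<in> M2 \<or> e5 \<in> M3"
  "f1 \<in> M1 \<longleftrightarrow> f2 \<in> M1" "f1 \<in> M2 \<longleftrightarrow> f2 \<in> M2" "f1 \<in> M3 \<longleftrightarrow> f2 \<in> M3"
  "f3 \<in> M1 \<longleftrightarrow> f4 \<in> M1" "f3 \<in> M2 \<longleftrightarrow> f4 \<in> M2" "f3 \<in> M3 \<longleftrightarrow> f4 \<in> M3"
  "f5 \<in> M1 \<longleftrightarrow> f0 \<in> M1" "f5 \<in> M2 \<longleftrightarrow> f0 \<in> M2" "f5 \<in> M3 \<longleftrightarrow> f0 \<in> M3"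
  using matching_at_vertices[OF M1] matching_at_vertices[OF M2] matching_at_vertices[OF M3]
    simply_covered unfolding exactly_one_def by smt+


definition array_colour :: "'e \<Rightarrow> nat" where
  "array_colour e = (if e \<in> M1 then 0 else if e \<in> M2 then 1 else 2)"

lemma array_colour_less_3: "array_colour e < 3"
  unfolding array_colour_def by auto

lemma array_colour_proper: "proper_colouring_on outer ep array_colour"
  unfolding proper_colouring_on_def
proof (intro ballI impI notI)
  fix e f
  assume ef: "e \<in> outer" "f \<in> outer" "e \<noteq> f \<and> ends ep e \<inter> ends ep f \<noteq> {}"
    and same: "array_colour e = array_colour f"
  then obtain v where v: "v \<in> ends ep e" "v \<in> ends ep f" by blast
  have "v \<in> V" using v(1) ef(1) outer_subset ends_in_V unfolding ends_def by auto
  have "exactly_one (x \<in> M1) (x \<in> M2) (x \<in> M3)" if "x \<in> outer" for x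
    using that core unfolding outer_def cover_count_eq_1_iff[symmetric] by auto
  then have "(e \<in> M1 \<and> f \<in> M1) \<or> (e \<in> M2 \<and> f \<in> M2) \<or> (e \<in> M3 \<and> f \<in> M3)"
    using ef(1,2) same unfolding exactly_one_def array_colour_def by (auto split: if_splits)
  then show False
    using perfect_matching_unique[OF M1 \<open>v \<in> V\<close> _ _ v] perfect_matching_unique[OF M2 \<open>v \<in> V\<close> _ _ v]
      perfect_matching_unique[OF M3 \<open>v \<in> V\<close> _ _ v] ef(3) by blast
qed

lemma array_colour_third_edges:
  "array_colour f1 = array_colour f2" "array_colour f3 = array_colour f4"
  "array_colour f5 = array_colour f0" "distinct [array_colour f0, array_colour f1, array_colour g]"
  using cover_pattern(13-21) matching_at_vertices(7)[OF M1] matching_at_vertices(7)[OF M2]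
    matching_at_vertices(7)[OF M3] simply_covered(1,2,7)
  unfolding array_colour_def exactly_one_def by auto

lemma covered_except_e0_e2_e4:
  assumes "e \<in> E" "e \<notin> {e0, e2, e4}"
  shows "e \<in> M1 \<or> e \<in> M2 \<or> e \<in> M3"
proof (cases "e \<in> {e0, e1, e2, e3, e4, e5}")
  case True
  then show ?thesis using assms(2) cover_pattern(10-12) by auto
next
  case False
  then have "exactly_one (e \<in> M1) (e \<in> M2) (e \<in> M3)"
    using core assms(1) unfolding cover_count_eq_1_iff[symmetric] by auto
  then show ?thesis unfolding exactly_one_def by blast
qed

lemma all_colours_at_other_vertex:
  assumes proper: "proper_colouring_on outer ep c" and less_3: "\<forall>e\<in>outer. c e < 3"
    and "v \<in> V" "v \<notin> {h0, h1, h2, h3, h4, h5, w}" and "k < 3"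
  shows "coloured_at outer ep c k v"
proof -
  let ?I = "{e\<in>outer. v \<in> ends ep e}"
  have "?I = {e\<in>E. v \<in> ends ep e}" using outer_incident_other[OF assms(4)] .
  then have "card ?I = 3" using incident_3 \<open>v \<in> V\<close> by simp
  moreover have "inj_on c ?I"
    using proper_colouring_onD[OF proper] unfolding inj_on_def by blast
  ultimately have "\<exists>e\<in>?I. c e = k"
    using three_colours_all_used[of ?I c k] finite_outer less_3 \<open>k < 3\<close> by auto
  then show ?thesis unfolding coloured_at_def by blast
qed

lemma perfect_matching_of_colouring:
  assumes proper: "proper_colouring_on outer ep c" and less_3: "\<forall>e\<in>outer. c e < 3"
    and "c g \<notin> {c f2, c f3, c f4, c f5}"
  shows "\<exists>N. perfect_matching V E ep N \<and> e0 \<in> N \<and> e2 \<in> N \<and> e4 \<in> N"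
proof -
  define N where "N = {e\<in>outer. c e = c g} \<union> {e0, e2, e4}"
  have "N \<subseteq> E" unfolding N_def using outer_subset edges_in_E by auto
  have mem: "e0 \<in> N" "e2 \<in> N" "e4 \<in> N" "e1 \<notin> N" "e3 \<notin> N" "e5 \<notin> N" "f0 \<notin> N" "f1 \<notin> N"
    "f2 \<notin> N" "f3 \<notin> N" "f4 \<notin> N" "f5 \<notin> N" "g \<in> N"
    unfolding N_def using edges_distinct third_edges_outer assms(3) unfolding outer_def by auto
  have "card {e\<in>N. v \<in> ends ep e} = 1" if v: "v \<in> V" for v
  proof (cases "v \<in> {h0, h1, h2, h3, h4, h5, w}")
    case True
    have "{e\<in>N. v \<in> ends ep e} = N \<inter> {e\<in>E. v \<in> ends ep e}" using \<open>N \<subseteq> E\<close> by auto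
    with True show ?thesis using incident mem by (auto simp: Int_insert_right)
  next
    case False
    obtain e where e: "e \<in> outer" "c e = c g" "v \<in> ends ep e"
      using all_colours_at_other_vertex[OF proper less_3 v False] less_3 third_edges_outer(5)
      unfolding coloured_at_def by blast
    have "{e\<in>N. v \<in> ends ep e} = {e}"
    proof (intro equalityI subsetI)
      fix f assume f: "f \<in> {e\<in>N. v \<in> ends ep e}"
      then have "f \<notin> {e0, e2, e4}" using False ends by auto
      then have "f \<in> outer" "c f = c g" using f unfolding N_def by auto
      then show "f \<in> {e}" using proper_colouring_onD[OF proper e(1) _ _ e(3)] e(2) f by auto
    qed (use e in \<open>auto simp: N_def\<close>)
    then show ?thesis by simp
  qed
  then have "perfect_matching V E ep N"
    unfolding perfect_matching_def using \<open>N \<subseteq> E\<close> loopless by blast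
  then show ?thesis using mem by blast
qed

lemma distinct_at_inner_vertex:
  assumes "distinct [C e0, C e5, C f0]" "distinct [C e0, C e1, C f1]" "distinct [C e1, C e2, C f2]"
    "distinct [C e2, C e3, C f3]" "distinct [C e3, C e4, C f4]" "distinct [C e4, C e5, C f5]"
    "distinct [C f0, C f1, C g]"
    and "v \<in> {h0, h1, h2, h3, h4, h5, w}" "e \<in> E" "f \<in> E" "e \<noteq> f" "v \<in> ends ep e" "v \<in> ends ep f"
  shows "C e \<noteq> C f"
proof -
  have triple: "e \<in> S" "f \<in> S" if "{x\<in>E. v \<in> ends ep x} = S" for S
    using that assms(9,10,12,13) by blast+
  have distinct_triple: "C e \<noteq> C f"
    if "e \<in> {x, y, z}" "f \<in> {x, y, z}" "distinct [C x, C y, C z]" for x y z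
    using that \<open>e \<noteq> f\<close> by auto
  from assms(8) consider "v = h0" | "v = h1" | "v = h2" | "v = h3" | "v = h4" | "v = h5" | "v = w"
    by blast
  then show ?thesis
  proof cases
    case 1
    show ?thesis using distinct_triple triple[OF incident(1)[folded 1]] assms(1) by blast
  next
    case 2
    show ?thesis using distinct_triple triple[OF incident(2)[folded 2]] assms(2) by blast
  next
    case 3
    show ?thesis using distinct_triple triple[OF incident(3)[folded 3]] assms(3) by blast
  next
    case 4
    show ?thesis using distinct_triple triple[OF incident(4)[folded 4]] assms(4) by blast
  next
    case 5
    show ?thesis using distinct_triple triple[OF incident(5)[folded 5]] assms(5) by blast
  next
    case 6
    show ?thesis using distinct_triple triple[OF incident(6)[folded 6]] assms(6) by blast
  next
    case 7
    show ?thesis using distinct_triple triple[OF incident(7)[folded 7]] assms(7) by blast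
  qed
qed

lemma colourable_of_inner_colours:
  assumes proper: "proper_colouring_on outer ep c" and less_3: "\<forall>e\<in>outer. c e < 3"
    and "a0 < 3" "a1 < 3" "a2 < 3" "a3 < 3" "a4 < 3" "a5 < 3" "k0 < 3" "k1 < 3"
    and "distinct [a0, a5, k0]" "distinct [a0, a1, k1]" "distinct [a1, a2, c f2]"
      "distinct [a2, a3, c f3]" "distinct [a3, a4, c f4]" "distinct [a4, a5, c f5]"
      "distinct [k0, k1, c g]"
  shows "three_edge_colourable E ep"
proof -
  define C where "C = c(e0 := a0, e1 := a1, e2 := a2, e3 := a3, e4 := a4, e5 := a5, f0 := k0, f1 := k1)"
  have C_inner: "C e0 = a0" "C e1 = a1" "C e2 = a2" "C e3 = a3" "C e4 = a4" "C e5 = a5"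
    "C f0 = k0" "C f1 = k1"
    unfolding C_def using edges_distinct by auto
  have C_outer: "C e = c e" if "e \<in> outer" for e
    using that unfolding C_def outer_def by auto
  have "C e < 3" if "e \<in> E" for e
  proof (cases "e \<in> outer")
    case True
    then show ?thesis using C_outer less_3 by simp
  next
    case False
    then have "e \<in> {e0, e1, e2, e3, e4, e5, f0, f1}" using that unfolding outer_def by blast
    then show ?thesis using C_inner assms(3-10) by auto
  qed
  moreover have "C e \<noteq> C f"
    if "e \<in> E" "f \<in> E" "e \<noteq> f" "v \<in> ends ep e" "v \<in> ends ep f" for e f v
  proof (cases "v \<in> {h0, h1, h2, h3, h4, h5, w}")
    case True
    have "C f2 = c f2" "C f3 = c f3" "C f4 = c f4" "C f5 = c f5" "C g = c g"
      using C_outer third_edges_outer by auto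
    then show ?thesis
      using distinct_at_inner_vertex[of C, OF _ _ _ _ _ _ _ True that] C_inner assms(11-17) by simp
  next
    case False
    then have "e \<in> outer" "f \<in> outer" using outer_incident_other that by blast+
    then show ?thesis using proper_colouring_onD[OF proper] C_outer that by metis
  qed
  ultimately show ?thesis
    unfolding three_edge_colourable_def using loopless by blast
qed

definition pendants :: "'v set" where
  "pendants = {h2, h3, h4, h5, w}"

definition pendant_edge :: "'v \<Rightarrow> 'e" where
  "pendant_edge s = (if s = h2 then f2 else if s = h3 then f3 else if s = h4 then f4
     else if s = h5 then f5 else g)"

lemma pendant_edge_simps [simp]:
  "pendant_edge h2 = f2" "pendant_edge h3 = f3" "pendant_edge h4 = f4" "pendant_edge h5 = f5"
  "pendant_edge w = g"
  unfolding pendant_edge_def using vertices_distinct by auto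

lemma outer_incident_pendant:
  "s \<in> pendants \<Longrightarrow> {e\<in>outer. s \<in> ends ep e} = {pendant_edge s}"
  using outer_incident unfolding pendants_def by auto

lemma coloured_at_pendant_iff:
  assumes "s \<in> pendants"
  shows "coloured_at outer ep c k s \<longleftrightarrow> c (pendant_edge s) = k"
proof -
  have "pendant_edge s \<in> outer" "s \<in> ends ep (pendant_edge s)"
    and "\<And>e. e \<in> outer \<Longrightarrow> s \<in> ends ep e \<Longrightarrow> e = pendant_edge s"
    using outer_incident_pendant[OF assms] by blast+
  then show ?thesis unfolding coloured_at_def by blast
qed

text \<open>Every vertex outside the hexagon and the triangle sees all three colours, and \<open>h0\<close>, \<open>h1\<close>
  see none, so a Kempe chain can only end at a pendant vertex.\<close>
lemma kempe_end_at_pendant: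
  assumes proper: "proper_colouring_on outer ep c" and less_3: "\<forall>e\<in>outer. c e < 3"
    and "a < 3" "b < 3" and q: "kempe_end outer ep c a b q"
  shows "q \<in> pendants" "c (pendant_edge q) \<in> {a, b}"
proof -
  have some: "coloured_at outer ep c a q \<or> coloured_at outer ep c b q"
    using q unfolding kempe_end_def by blast
  show "q \<in> pendants"
  proof (rule ccontr)
    assume "q \<notin> pendants"
    show False
    proof (cases "q \<in> {h0, h1}")
      case True
      then show False using some outer_incident(1,2) unfolding coloured_at_def by auto
    next
      case False
      with \<open>q \<notin> pendants\<close> have other: "q \<notin> {h0, h1, h2, h3, h4, h5, w}"
        unfolding pendants_def by auto
      have "q \<in> V" using some outer_subset ends_in_V unfolding coloured_at_def ends_def by auto
      then show False
        using all_colours_at_other_vertex[OF proper less_3 _ other] q assms(3,4)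
        unfolding kempe_end_def by blast
    qed
  qed
  then show "c (pendant_edge q) \<in> {a, b}" using some coloured_at_pendant_iff by auto
qed

lemma pendant_kempe_switch:
  assumes proper: "proper_colouring_on outer ep c" and less_3: "\<forall>e\<in>outer. c e < 3"
    and ab: "a < 3" "b < 3" "a \<noteq> b" and p: "p \<in> pendants" "c (pendant_edge p) = a"
  obtains c' q where "proper_colouring_on outer ep c'" "\<forall>e\<in>outer. c' e < 3"
    "q \<in> pendants" "q \<noteq> p" "c (pendant_edge q) \<in> {a, b}"
    "\<forall>s\<in>pendants. c' (pendant_edge s) =
       (if s \<in> {p, q} then transpose a b (c (pendant_edge s)) else c (pendant_edge s))"
proof -
  have "coloured_at outer ep c a p" "\<not> coloured_at outer ep c b p"
    using coloured_at_pendant_iff[OF p(1)] p(2) ab(3) by auto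
  from kempe_switch[OF finite_outer outer_loopless proper this]
  obtain c' Ob q where c': "proper_colouring_on outer ep c'"
      "\<forall>e\<in>outer. \<forall>v\<in>ends ep e. c' e = (if v \<in> Ob then transpose a b (c e) else c e)"
    and Ob: "p \<in> Ob" "q \<in> Ob" "q \<noteq> p" "kempe_end outer ep c a b q"
      "\<forall>v\<in>Ob. kempe_end outer ep c a b v \<longrightarrow> v = p \<or> v = q" .
  have q: "q \<in> pendants" "c (pendant_edge q) \<in> {a, b}"
    using kempe_end_at_pendant[OF proper less_3 ab(1,2) Ob(4)] by auto
  have "c' e < 3" if "e \<in> outer" for e
  proof -
    obtain v where "v \<in> ends ep e" unfolding ends_def by blast
    then show ?thesis using c'(2) that less_3 ab unfolding transpose_def by auto
  qed
  moreover have "c' (pendant_edge s) =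
      (if s \<in> {p, q} then transpose a b (c (pendant_edge s)) else c (pendant_edge s))"
    if "s \<in> pendants" for s
  proof -
    have "pendant_edge s \<in> outer" "s \<in> ends ep (pendant_edge s)"
      using outer_incident_pendant[OF that] by auto
    then have c's: "c' (pendant_edge s) =
        (if s \<in> Ob then transpose a b (c (pendant_edge s)) else c (pendant_edge s))"
      using c'(2) by blast
    show ?thesis
    proof (cases "c (pendant_edge s) \<in> {a, b}")
      case True
      then have "kempe_end outer ep c a b s"
        using coloured_at_pendant_iff[OF that] ab(3) unfolding kempe_end_def by auto
      then have "s \<in> Ob \<longleftrightarrow> s \<in> {p, q}" using Ob by blast
      then show ?thesis using c's by simp
    next
      case False
      then show ?thesis using c's by auto
    qed
  qed
  ultimately show thesis using that c'(1) q Ob(3) by blast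
qed


lemma perfect_matching_after_switch_to_h3:
  assumes proper: "proper_colouring_on outer ep c" and less_3: "\<forall>e\<in>outer. c e < 3"
    and "distinct [x, y, z]" "x < 3" "y < 3" "z < 3"
    and "c g = x" "c f2 = x" "c f3 = y" "c f4 = x" "c f5 = z"
  shows "\<exists>N. perfect_matching V E ep N \<and> e0 \<in> N \<and> e2 \<in> N \<and> e4 \<in> N"
proof -
  obtain c' q where c': "proper_colouring_on outer ep c'" "\<forall>e\<in>outer. c' e < 3"
    and q: "q \<in> pendants" "q \<noteq> h5" "c (pendant_edge q) \<in> {z, x}"
    and swapped: "\<forall>s\<in>pendants. c' (pendant_edge s) =
       (if s \<in> {h5, q} then transpose z x (c (pendant_edge s)) else c (pendant_edge s))"
    using pendant_kempe_switch[OF proper less_3, of z x h5] assms(3-11)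
    unfolding pendants_def by auto
  have pendant: "h2 \<in> pendants" "h3 \<in> pendants" "h4 \<in> pendants" "h5 \<in> pendants" "w \<in> pendants"
    unfolding pendants_def by simp_all
  have "q = w \<or> q = h2 \<or> q = h4" using q assms(3,7-10) unfolding pendants_def by auto
  moreover note at = bspec[OF swapped pendant(1)] bspec[OF swapped pendant(2)]
    bspec[OF swapped pendant(3)] bspec[OF swapped pendant(4)] bspec[OF swapped pendant(5)]
  moreover have "transpose z x x = z" "transpose z x y = y" "transpose z x z = x"
    using assms(3) by auto
  ultimately consider "c' g = z" "c' f2 = x" "c' f3 = y" "c' f4 = x" "c' f5 = x"
    | "c' g = x" "c' f2 = z" "c' f3 = y" "c' f4 = x" "c' f5 = x"
    | "c' g = x" "c' f2 = x" "c' f3 = y" "c' f4 = z" "c' f5 = x"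
    using assms(7-11) vertices_distinct by (elim disjE) simp_all
  then show ?thesis
  proof cases
    case 1
    then show ?thesis using perfect_matching_of_colouring[OF c'] assms(3) by auto
  next
    case 2
    have "three_edge_colourable E ep"
      by (rule colourable_of_inner_colours[OF c', of x y x z y z y z]) (use 2 assms(3-6) in auto)
    then show ?thesis using not_colourable by blast
  next
    case 3
    have "three_edge_colourable E ep"
      by (rule colourable_of_inner_colours[OF c', of x y z x y z y z]) (use 3 assms(3-6) in auto)
    then show ?thesis using not_colourable by blast
  qed
qed

text \<open>If the spokes \<open>f3\<close>, \<open>f4\<close> do not share the
  colour of \<open>g\<close>, its colour class completes \<open>e0, e2, e4\<close>; otherwise Kempe switches starting at
  \<open>h2\<close> and then at \<open>h5\<close> either reach that situation or extend to a 3-edge-colouring of \<open>G\<close>.\<close>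
lemma perfect_matching_through_e0_e2_e4:
  "\<exists>N. perfect_matching V E ep N \<and> e0 \<in> N \<and> e2 \<in> N \<and> e4 \<in> N"
proof -
  let ?c = array_colour
  define x y z where "x = ?c g" and "y = ?c f2" and "z = ?c f5"
  have colours: "?c f1 = y" "?c f0 = z" "distinct [x, y, z]" "x < 3" "y < 3" "z < 3"
    using array_colour_third_edges array_colour_less_3 unfolding x_def y_def z_def by auto
  have less_3: "\<forall>e\<in>outer. ?c e < 3" using array_colour_less_3 by blast
  show ?thesis
  proof (cases "?c f3 = x")
    case False
    then show ?thesis
      using perfect_matching_of_colouring[OF array_colour_proper less_3] array_colour_third_edges(2)
        colours(3) unfolding x_def y_def z_def by auto
  next
    case True
    then have f34: "?c f3 = x" "?c f4 = x" using array_colour_third_edges(2) by auto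
    obtain c' q where c': "proper_colouring_on outer ep c'" "\<forall>e\<in>outer. c' e < 3"
      and q: "q \<in> pendants" "q \<noteq> h2" "?c (pendant_edge q) \<in> {y, x}"
      and swapped: "\<forall>s\<in>pendants. c' (pendant_edge s) =
         (if s \<in> {h2, q} then transpose y x (?c (pendant_edge s)) else ?c (pendant_edge s))"
      using pendant_kempe_switch[OF array_colour_proper less_3, of y x h2] colours
      unfolding pendants_def y_def by auto
    have pendant: "h2 \<in> pendants" "h3 \<in> pendants" "h4 \<in> pendants" "h5 \<in> pendants" "w \<in> pendants"
      unfolding pendants_def by simp_all
    have "q = w \<or> q = h4 \<or> q = h3"
      using q f34 colours unfolding pendants_def x_def y_def z_def by auto
    moreover note at = bspec[OF swapped pendant(1)] bspec[OF swapped pendant(2)]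
      bspec[OF swapped pendant(3)] bspec[OF swapped pendant(4)] bspec[OF swapped pendant(5)]
    moreover have "transpose y x x = y" "transpose y x y = x" "transpose y x z = z"
      using colours(3) by auto
    ultimately consider "c' g = y" "c' f2 = x" "c' f3 = x" "c' f4 = x" "c' f5 = z"
      | "c' g = x" "c' f2 = x" "c' f3 = x" "c' f4 = y" "c' f5 = z"
      | "c' g = x" "c' f2 = x" "c' f3 = y" "c' f4 = x" "c' f5 = z"
      using f34 vertices_distinct unfolding x_def y_def z_def by (elim disjE) simp_all
    then show ?thesis
    proof cases
      case 1
      then show ?thesis using perfect_matching_of_colouring[OF c'] colours(3) by auto
    next
      case 2
      have "three_edge_colourable E ep"
        by (rule colourable_of_inner_colours[OF c', of x z y z x y z y]) (use 2 colours in auto)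
      then show ?thesis using not_colourable by blast
    next
      case 3
      then show ?thesis using perfect_matching_after_switch_to_h3[OF c' colours(3-6)] by blast
    qed
  qed
qed


lemma fourth_perfect_matching:
  obtains N where "perfect_matching V E ep N" "N \<notin> {M1, M2, M3}" "E \<subseteq> M1 \<union> M2 \<union> M3 \<union> N"
proof -
  obtain N where N: "perfect_matching V E ep N" "e0 \<in> N" "e2 \<in> N" "e4 \<in> N"
    using perfect_matching_through_e0_e2_e4 by blast
  have "N \<notin> {M1, M2, M3}" using N(2) cover_pattern(1-3) by auto
  moreover have "E \<subseteq> M1 \<union> M2 \<union> M3 \<union> N" using covered_except_e0_e2_e4 N(2-4) by blast
  ultimately show thesis using that N(1) by blast
qed

end

section \<open>Induced hexagons and triangles\<close>

lemma lessThan_6: "{..<(6::nat)} = {0, 1, 2, 3, 4, 5}"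
  by auto

lemma induced_hexagon_on_rotate:
  assumes "induced_hexagon_on V E ep C vs"
  shows "induced_hexagon_on V E ep C (\<lambda>k. vs (Suc k mod 6))"
proof -
  let ?r = "\<lambda>k::nat. Suc k mod 6" and ?P = "\<lambda>j. {vs j, vs (Suc j mod 6)}"
  have img: "?r ` {..<6} = {..<6}" and "inj_on ?r {..<6}"
    unfolding lessThan_6 by auto
  have hex: "inj_on vs {..<6}" "vs ` {..<6} \<subseteq> V"
    "\<forall>j<6. card {e\<in>E. ends ep e = ?P j} = 1"
    "\<forall>e\<in>E. ends ep e \<subseteq> vs ` {..<6} \<longrightarrow> (\<exists>j<6. ends ep e = ?P j)"
    "C = {e\<in>E. \<exists>j<6. ends ep e = ?P j}"
    using assms unfolding induced_hexagon_on_def by blast+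
  have reindex: "(\<exists>i<6. X = ?P (?r i)) \<longleftrightarrow> (\<exists>j<6. X = ?P j)" for X
  proof
    assume "\<exists>j<6. X = ?P j"
    then obtain j where "j < 6" "X = ?P j" by blast
    moreover have "j \<in> ?r ` {..<6}" using img \<open>j < 6\<close> by simp
    then obtain i where "i < 6" "j = ?r i" by auto
    ultimately show "\<exists>i<6. X = ?P (?r i)" by blast
  next
    assume "\<exists>i<6. X = ?P (?r i)"
    moreover have "?r i < 6" for i by simp
    ultimately show "\<exists>j<6. X = ?P j" by blast
  qed
  have image: "(\<lambda>k. vs (?r k)) ` {..<6} = vs ` {..<6}"
    using img by (metis image_image)
  show ?thesis
    unfolding induced_hexagon_on_def
  proof (intro conjI)
    have "inj_on (vs \<circ> ?r) {..<6}"
      by (rule comp_inj_on[OF \<open>inj_on ?r {..<6}\<close>]) (simp only: img hex(1))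
    then show "inj_on (\<lambda>k. vs (?r k)) {..<6}" by (simp add: o_def)
    show "(\<lambda>k. vs (?r k)) ` {..<6} \<subseteq> V" using image hex(2) by simp
    show "\<forall>i<6. card {e\<in>E. ends ep e = ?P (?r i)} = 1" using hex(3) by simp
    show "\<forall>e\<in>E. ends ep e \<subseteq> (\<lambda>k. vs (?r k)) ` {..<6} \<longrightarrow> (\<exists>i<6. ends ep e = ?P (?r i))"
      using hex(4) reindex image by simp
    show "C = {e\<in>E. \<exists>i<6. ends ep e = ?P (?r i)}" using hex(5) reindex by simp
  qed
qed

lemma induced_hexagon_on_cong:
  assumes "induced_hexagon_on V E ep C vs" and same: "\<And>k. k < 6 \<Longrightarrow> vs' k = vs k"
  shows "induced_hexagon_on V E ep C vs'"
proof -
  have pair: "{vs' i, vs' (Suc i mod 6)} = {vs i, vs (Suc i mod 6)}" if "i < 6" for i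
    using same that by simp
  have "(\<exists>i<6. X = {vs' i, vs' (Suc i mod 6)}) \<longleftrightarrow> (\<exists>i<6. X = {vs i, vs (Suc i mod 6)})" for X
    using pair by auto
  moreover have "vs' ` {..<6} = vs ` {..<6}" by (rule image_cong) (simp_all add: same)
  moreover have "inj_on vs' {..<6} \<longleftrightarrow> inj_on vs {..<6}" by (rule inj_on_cong) (simp add: same)
  ultimately show ?thesis
    using assms(1) pair unfolding induced_hexagon_on_def by simp
qed

lemma induced_hexagon_on_rotate_by:
  assumes "induced_hexagon_on V E ep C vs"
  shows "induced_hexagon_on V E ep C (\<lambda>k. vs ((k + j) mod 6))"
proof (induction j)
  case 0
  show ?case by (rule induced_hexagon_on_cong[OF assms]) simp
next
  case (Suc j)
  have "(\<lambda>k. vs ((Suc k mod 6 + j) mod 6)) = (\<lambda>k. vs ((k + Suc j) mod 6))"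
    by (simp add: mod_add_left_eq)
  then show ?case using induced_hexagon_on_rotate[OF Suc.IH] by simp
qed

lemma induced_hexagon_on_distinct:
  assumes "induced_hexagon_on V E ep C vs" "i < 6" "j < 6" "i \<noteq> j"
  shows "vs i \<noteq> vs j"
proof -
  have "inj_on vs {..<6}" using assms(1) unfolding induced_hexagon_on_def by simp
  then show ?thesis using inj_on_eq_iff[of vs "{..<6}" i j] assms(2-4) by simp
qed

lemma induced_hexagon_on_adjacent:
  assumes H: "induced_hexagon_on V E ep C vs" and "e \<in> E" "ends ep e = {vs a, vs b}" "a < 6" "b < 6"
  shows "b = Suc a mod 6 \<or> a = Suc b mod 6"
proof -
  have "ends ep e \<subseteq> vs ` {..<6}" using assms(3-5) by auto
  then obtain i where i: "i < 6" "ends ep e = {vs i, vs (Suc i mod 6)}"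
    using H assms(2) unfolding induced_hexagon_on_def by blast
  then have "(vs a = vs i \<and> vs b = vs (Suc i mod 6)) \<or> (vs a = vs (Suc i mod 6) \<and> vs b = vs i)"
    using assms(3) by (simp add: doubleton_eq_iff)
  moreover have "inj_on vs {..<6}" using H unfolding induced_hexagon_on_def by simp
  ultimately have "(a = i \<and> b = Suc i mod 6) \<or> (a = Suc i mod 6 \<and> b = i)"
    using inj_on_eq_iff[of vs "{..<6}"] assms(4,5) i(1) by auto
  then show ?thesis by auto
qed

lemma induced_hexagon_on_edges:
  assumes "induced_hexagon_on V E ep C vs"
  obtains he where "\<forall>i<6. he i \<in> E \<and> ends ep (he i) = {vs i, vs (Suc i mod 6)}"
    "\<forall>i<6. \<forall>e\<in>E. ends ep e = {vs i, vs (Suc i mod 6)} \<longrightarrow> e = he i"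
    "C = he ` {..<6}"
proof -
  have "\<forall>i. \<exists>e. i < 6 \<longrightarrow> {x\<in>E. ends ep x = {vs i, vs (Suc i mod 6)}} = {e}"
    using assms unfolding induced_hexagon_on_def by (simp add: card_1_singleton_iff)
  then obtain he where he: "\<And>i. i < 6 \<Longrightarrow> {x\<in>E. ends ep x = {vs i, vs (Suc i mod 6)}} = {he i}"
    by (metis choice)
  have edge_iff: "e \<in> E \<and> ends ep e = {vs i, vs (Suc i mod 6)} \<longleftrightarrow> e = he i" if "i < 6" for e i
    using he[OF that] by (simp add: set_eq_iff)
  have "e \<in> C \<longleftrightarrow> (\<exists>i<6. e \<in> E \<and> ends ep e = {vs i, vs (Suc i mod 6)})" for e
    using assms unfolding induced_hexagon_on_def by blast
  moreover have "(\<exists>i<6. e \<in> E \<and> ends ep e = {vs i, vs (Suc i mod 6)}) \<longleftrightarrow> e \<in> he ` {..<6}" for e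
    using edge_iff by blast
  ultimately have "C = he ` {..<6}" by blast
  moreover have "\<forall>i<6. he i \<in> E \<and> ends ep (he i) = {vs i, vs (Suc i mod 6)}"
    "\<forall>i<6. \<forall>e\<in>E. ends ep e = {vs i, vs (Suc i mod 6)} \<longrightarrow> e = he i"
    using edge_iff by blast+
  ultimately show thesis using that by blast
qed

lemma induced_hexagon_on_edge:
  assumes "induced_hexagon_on V E ep C vs" "i < 6"
  shows "\<exists>e\<in>E. ends ep e = {vs i, vs (Suc i mod 6)}"
proof -
  have "card {e\<in>E. ends ep e = {vs i, vs (Suc i mod 6)}} = 1"
    using assms unfolding induced_hexagon_on_def by blast
  then obtain e where "{e'\<in>E. ends ep e' = {vs i, vs (Suc i mod 6)}} = {e}"
    by (rule card_1_singletonE)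
  then show ?thesis by blast
qed

lemma triangle_edge:
  "triangle V E ep T \<Longrightarrow> x \<in> T \<Longrightarrow> y \<in> T \<Longrightarrow> x \<noteq> y \<Longrightarrow> \<exists>e\<in>E. ends ep e = {x, y}"
  unfolding triangle_def by (auto simp: insert_commute)

lemma triangle_third_vertex:
  "triangle V E ep T \<Longrightarrow> x \<in> T \<Longrightarrow> y \<in> T \<Longrightarrow> \<exists>z\<in>T. z \<noteq> x \<and> z \<noteq> y"
  unfolding triangle_def by auto

lemma card_3_eq:
  assumes "finite I" "card I = 3" "a \<in> I" "b \<in> I" "c \<in> I" "a \<noteq> b" "a \<noteq> c" "b \<noteq> c"
  shows "I = {a, b, c}"
  using assms by (metis card_3_iff card_subset_eq empty_subsetI insert_subset)

lemma card_3_obtain_third: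
  assumes "finite I" "card I = 3" "a \<in> I" "b \<in> I" "a \<noteq> b"
  obtains c where "c \<notin> {a, b}" "I = {a, b, c}"
proof -
  have "\<not> I \<subseteq> {a, b}"
  proof
    assume "I \<subseteq> {a, b}"
    then have "card I \<le> card {a, b}" by (intro card_mono) auto
    also have "\<dots> \<le> 2" by (simp add: card_insert_if)
    finally show False using assms(2) by simp
  qed
  then obtain c where "c \<in> I" "c \<notin> {a, b}" by blast
  then show thesis using that card_3_eq[OF assms(1-4) \<open>c \<in> I\<close> assms(5)] by auto
qed

text \<open>An edge of a triangle through a hexagon vertex must be a hexagon edge: otherwise the
  vertex would have two triangle edges besides its two hexagon edges.\<close>
lemma triangle_at_hexagon_vertex:
  assumes H: "induced_hexagon_on V E ep C vs" and "finite E"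
    and incident_3: "\<forall>v\<in>V. card {e\<in>E. v \<in> ends ep e} = 3"
    and tri: "triangle V E ep T" and "vs 0 \<in> T"
  shows "vs 1 \<in> T \<or> vs 5 \<in> T"
proof (rule ccontr)
  assume not_adj: "\<not> (vs 1 \<in> T \<or> vs 5 \<in> T)"
  have off: "x \<notin> vs ` {..<6}" if x: "x \<in> T" "x \<noteq> vs 0" for x
  proof
    assume "x \<in> vs ` {..<6}"
    then obtain j where j: "j < 6" "x = vs j" by auto
    obtain e where "e \<in> E" "ends ep e = {vs 0, vs j}"
      using triangle_edge[OF tri \<open>vs 0 \<in> T\<close> x(1)] x(2) j(2) by metis
    then have "j = Suc 0 mod 6 \<or> 0 = Suc j mod 6"
      using induced_hexagon_on_adjacent[OF H, of e 0 j] j(1) by simp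
    then have "j = 1 \<or> j = 5" using j(1) by presburger
    then show False using not_adj x(1) j(2) by auto
  qed
  obtain u where u: "u \<in> T" "u \<noteq> vs 0"
    using tri unfolding triangle_def by auto
  obtain u' where u': "u' \<in> T" "u' \<noteq> vs 0" "u' \<noteq> u"
    using triangle_third_vertex[OF tri \<open>vs 0 \<in> T\<close> u(1)] by blast
  obtain a b where a: "a \<in> E" "ends ep a = {vs 0, u}" and b: "b \<in> E" "ends ep b = {vs 0, u'}"
    using triangle_edge[OF tri \<open>vs 0 \<in> T\<close>] u u' by metis
  obtain c where c: "c \<in> E" "ends ep c = {vs 0, vs 1}"
    using induced_hexagon_on_edge[OF H, of 0] by auto
  obtain d where d: "d \<in> E" "ends ep d = {vs 5, vs 0}"
    using induced_hexagon_on_edge[OF H, of 5] by auto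
  have "vs 0 \<noteq> vs 1" "vs 0 \<noteq> vs 5" "vs 1 \<noteq> vs 5"
    using induced_hexagon_on_distinct[OF H] by auto
  moreover have "u \<notin> vs ` {..<6}" "u' \<notin> vs ` {..<6}" using off u u' by auto
  moreover have "vs 1 \<in> vs ` {..<6}" "vs 5 \<in> vs ` {..<6}" by auto
  ultimately have "u \<noteq> vs 1" "u \<noteq> vs 5" "u' \<noteq> vs 1" "u' \<noteq> vs 5"
    and "vs 0 \<noteq> vs 1" "vs 0 \<noteq> vs 5" "vs 1 \<noteq> vs 5" by blast+
  then have "{vs 0, u} \<noteq> {vs 0, u'}" "{vs 0, u} \<noteq> {vs 0, vs 1}" "{vs 0, u} \<noteq> {vs 5, vs 0}"
    "{vs 0, u'} \<noteq> {vs 0, vs 1}" "{vs 0, u'} \<noteq> {vs 5, vs 0}" "{vs 0, vs 1} \<noteq> {vs 5, vs 0}"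
    using u(2) u'(2,3) by (auto simp: doubleton_eq_iff)
  then have "a \<noteq> b" "a \<noteq> c" "a \<noteq> d" "b \<noteq> c" "b \<noteq> d" "c \<noteq> d"
    using a(2) b(2) c(2) d(2) by metis+
  then have "card {a, b, c, d} = 4" by simp
  moreover have "card {a, b, c, d} \<le> card {e\<in>E. vs 0 \<in> ends ep e}"
    by (rule card_mono) (use \<open>finite E\<close> a b c d in auto)
  moreover have "vs 0 \<in> V" using H unfolding induced_hexagon_on_def by auto
  then have "card {e\<in>E. vs 0 \<in> ends ep e} = 3" using incident_3 by blast
  ultimately show False by simp
qed

lemma triangle_on_hexagon_edge:
  assumes H: "induced_hexagon_on V E ep C vs" and "finite E"
    and "\<forall>v\<in>V. card {e\<in>E. v \<in> ends ep e} = 3"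
    and tri: "triangle V E ep T" and "T \<inter> vs ` {..<6} \<noteq> {}"
  obtains vs' where "induced_hexagon_on V E ep C vs'" "vs' 0 \<in> T" "vs' 1 \<in> T"
proof -
  obtain j where "j < 6" "vs j \<in> T" using assms(5) by auto
  define vs1 where "vs1 = (\<lambda>k. vs ((k + j) mod 6))"
  have H1: "induced_hexagon_on V E ep C vs1"
    unfolding vs1_def by (rule induced_hexagon_on_rotate_by[OF H])
  have "vs1 0 \<in> T" using \<open>j < 6\<close> \<open>vs j \<in> T\<close> unfolding vs1_def by simp
  show thesis
  proof (cases "vs1 1 \<in> T")
    case True
    then show thesis using that H1 \<open>vs1 0 \<in> T\<close> by blast
  next
    case False
    then have "vs1 5 \<in> T" using triangle_at_hexagon_vertex[OF H1 assms(2,3) tri \<open>vs1 0 \<in> T\<close>] by blast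
    moreover have "induced_hexagon_on V E ep C (\<lambda>k. vs1 ((k + 5) mod 6))"
      by (rule induced_hexagon_on_rotate_by[OF H1])
    ultimately show thesis using that \<open>vs1 0 \<in> T\<close> by simp
  qed
qed

lemma triangle_apex:
  assumes H: "induced_hexagon_on V E ep C vs" and ends_in_V: "\<forall>e\<in>E. fst (ep e) \<in> V \<and> snd (ep e) \<in> V"
    and tri: "triangle V E ep T" "vs 0 \<in> T" "vs 1 \<in> T"
  obtains w f0 f1 where "w \<in> V" "w \<notin> vs ` {..<6}"
    "f0 \<in> E" "ends ep f0 = {vs 0, w}" "f1 \<in> E" "ends ep f1 = {vs 1, w}"
proof -
  obtain w where w: "w \<in> T" "w \<noteq> vs 0" "w \<noteq> vs 1"
    using triangle_third_vertex[OF tri] by blast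
  obtain f0 f1 where f0: "f0 \<in> E" "ends ep f0 = {vs 0, w}" and f1: "f1 \<in> E" "ends ep f1 = {vs 1, w}"
    using triangle_edge[OF tri(1)] tri(2,3) w by metis
  have "w \<in> V" using f0 ends_in_V unfolding ends_def by (auto simp: doubleton_eq_iff)
  moreover have "w \<notin> vs ` {..<6}"
  proof
    assume "w \<in> vs ` {..<6}"
    then obtain j where j: "j < 6" "w = vs j" by auto
    have "ends ep f0 = {vs 0, vs j}" "ends ep f1 = {vs 1, vs j}" using f0(2) f1(2) j(2) by simp_all
    then have "j = Suc 0 mod 6 \<or> 0 = Suc j mod 6" "j = Suc 1 mod 6 \<or> 1 = Suc j mod 6"
      using induced_hexagon_on_adjacent[OF H f0(1) _ _ j(1), of 0]
        induced_hexagon_on_adjacent[OF H f1(1) _ _ j(1), of 1] by simp_all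
    moreover have "j = 0 \<or> j = 1 \<or> j = 2 \<or> j = 3 \<or> j = 4 \<or> j = 5" using j(1) by linarith
    ultimately show False by (elim disjE) simp_all
  qed
  ultimately show thesis using that f0 f1 by blast
qed

lemma hexagon_triangle_of_core:
  fixes E :: "'e set"
  assumes "finite E" and ends_in_V: "\<forall>e\<in>E. fst (ep e) \<in> V \<and> snd (ep e) \<in> V"
    and "\<forall>e\<in>E. \<not> is_loop ep e" and incident_3: "\<forall>v\<in>V. card {e\<in>E. v \<in> ends ep e} = 3"
    and "perfect_matching V E ep M1" "perfect_matching V E ep M2" "perfect_matching V E ep M3"
    and "\<not> three_edge_colourable E ep"
    and H: "induced_hexagon_on V E ep (core E (M1, M2, M3)) vs"
    and tri: "triangle V E ep T" "vs 0 \<in> T" "vs 1 \<in> T"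
  obtains he :: "nat \<Rightarrow> 'e" and w f0 f1 f2 f3 f4 f5 g where "hexagon_triangle V E ep M1 M2 M3
    (vs 0) (vs 1) (vs 2) (vs 3) (vs 4) (vs 5) w (he 0) (he 1) (he 2) (he 3) (he 4) (he 5)
    f0 f1 f2 f3 f4 f5 g"
proof -
  obtain he where he: "\<forall>i<6. he i \<in> E \<and> ends ep (he i) = {vs i, vs (Suc i mod 6)}"
    and he_core: "core E (M1, M2, M3) = he ` {..<6}"
    using induced_hexagon_on_edges[OF H] by metis
  have succ: "Suc 0 mod 6 = 1" "Suc 1 mod 6 = 2" "Suc 2 mod 6 = 3" "Suc 3 mod 6 = 4"
    "Suc 4 mod 6 = 5" "Suc 5 mod 6 = (0::nat)" by simp_all
  have he_ends: "ends ep (he 0) = {vs 0, vs 1}" "ends ep (he 1) = {vs 1, vs 2}"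
    "ends ep (he 2) = {vs 2, vs 3}" "ends ep (he 3) = {vs 3, vs 4}"
    "ends ep (he 4) = {vs 4, vs 5}" "ends ep (he 5) = {vs 5, vs 0}"
    using he[rule_format, of 0, unfolded succ] he[rule_format, of 1, unfolded succ]
      he[rule_format, of 2, unfolded succ] he[rule_format, of 3, unfolded succ]
      he[rule_format, of 4, unfolded succ] he[rule_format, of 5, unfolded succ] by simp_all
  have he_E: "he i \<in> E" if "i < 6" for i using he that by blast
  have vs_V: "vs i \<in> V" if "i < 6" for i using H that unfolding induced_hexagon_on_def by auto
  have vs_distinct: "vs i \<noteq> vs j" if "i < 6" "j < 6" "i \<noteq> j" for i j
    using induced_hexagon_on_distinct[OF H that] .
  obtain w f0 f1 where "w \<in> V" "w \<notin> vs ` {..<6}"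
    and f0: "f0 \<in> E" "ends ep f0 = {vs 0, w}" and f1: "f1 \<in> E" "ends ep f1 = {vs 1, w}"
    by (rule triangle_apex[OF H ends_in_V tri])
  then have w_distinct: "w \<noteq> vs i" if "i < 6" for i using that by auto
  have incident_finite: "finite {e\<in>E. v \<in> ends ep e}" for v using \<open>finite E\<close> by simp
  have incident_card: "card {e\<in>E. v \<in> ends ep e} = 3" if "v \<in> V" for v
    using incident_3 that by blast
  have edges_distinct: "he 0 \<noteq> he 5" "he 0 \<noteq> f0" "he 5 \<noteq> f0" "he 0 \<noteq> he 1" "he 0 \<noteq> f1"
    "he 1 \<noteq> f1" "he 1 \<noteq> he 2" "he 2 \<noteq> he 3" "he 3 \<noteq> he 4" "he 4 \<noteq> he 5" "f0 \<noteq> f1"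
    using he_ends f0(2) f1(2) vs_distinct w_distinct by (auto simp: doubleton_eq_iff)
  have mem: "he 0 \<in> {e\<in>E. vs 0 \<in> ends ep e}" "he 5 \<in> {e\<in>E. vs 0 \<in> ends ep e}"
    "f0 \<in> {e\<in>E. vs 0 \<in> ends ep e}"
    "he 0 \<in> {e\<in>E. vs 1 \<in> ends ep e}" "he 1 \<in> {e\<in>E. vs 1 \<in> ends ep e}"
    "f1 \<in> {e\<in>E. vs 1 \<in> ends ep e}"
    "he 1 \<in> {e\<in>E. vs 2 \<in> ends ep e}" "he 2 \<in> {e\<in>E. vs 2 \<in> ends ep e}"
    "he 2 \<in> {e\<in>E. vs 3 \<in> ends ep e}" "he 3 \<in> {e\<in>E. vs 3 \<in> ends ep e}"
    "he 3 \<in> {e\<in>E. vs 4 \<in> ends ep e}" "he 4 \<in> {e\<in>E. vs 4 \<in> ends ep e}"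
    "he 4 \<in> {e\<in>E. vs 5 \<in> ends ep e}" "he 5 \<in> {e\<in>E. vs 5 \<in> ends ep e}"
    "f0 \<in> {e\<in>E. w \<in> ends ep e}" "f1 \<in> {e\<in>E. w \<in> ends ep e}"
    using he_E he_ends f0 f1 by auto
  have at_0: "{e\<in>E. vs 0 \<in> ends ep e} = {he 0, he 5, f0}"
    using card_3_eq[OF incident_finite incident_card[OF vs_V] mem(1-3) edges_distinct(1-3)] by simp
  have at_1: "{e\<in>E. vs 1 \<in> ends ep e} = {he 0, he 1, f1}"
    using card_3_eq[OF incident_finite incident_card[OF vs_V] mem(4-6) edges_distinct(4-6)] by simp
  note third = card_3_obtain_third[OF incident_finite incident_card]
  obtain f2 where f2: "f2 \<notin> {he 1, he 2}" "{e\<in>E. vs 2 \<in> ends ep e} = {he 1, he 2, f2}"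
    by (rule third[OF vs_V mem(7,8) edges_distinct(7)]) simp
  obtain f3 where f3: "f3 \<notin> {he 2, he 3}" "{e\<in>E. vs 3 \<in> ends ep e} = {he 2, he 3, f3}"
    by (rule third[OF vs_V mem(9,10) edges_distinct(8)]) simp
  obtain f4 where f4: "f4 \<notin> {he 3, he 4}" "{e\<in>E. vs 4 \<in> ends ep e} = {he 3, he 4, f4}"
    by (rule third[OF vs_V mem(11,12) edges_distinct(9)]) simp
  obtain f5 where f5: "f5 \<notin> {he 4, he 5}" "{e\<in>E. vs 5 \<in> ends ep e} = {he 4, he 5, f5}"
    by (rule third[OF vs_V mem(13,14) edges_distinct(10)]) simp
  obtain g where g: "g \<notin> {f0, f1}" "{e\<in>E. w \<in> ends ep e} = {f0, f1, g}"
    by (rule third[OF \<open>w \<in> V\<close> mem(15,16) edges_distinct(11)])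
  have "he ` {..<6} = {he 0, he 1, he 2, he 3, he 4, he 5}" by (auto simp: lessThan_6)
  then have core: "\<forall>e\<in>E. cover_count (M1, M2, M3) e \<noteq> 1 \<longleftrightarrow> e \<in> {he 0, he 1, he 2, he 3, he 4, he 5}"
    using he_core unfolding core_def by blast
  have "hexagon_triangle V E ep M1 M2 M3 (vs 0) (vs 1) (vs 2) (vs 3) (vs 4) (vs 5) w
    (he 0) (he 1) (he 2) (he 3) (he 4) (he 5) f0 f1 f2 f3 f4 f5 g"
  proof (unfold_locales)
    have "distinct [vs 0, vs 1, vs 2, vs 3, vs 4, vs 5]" by (simp add: vs_distinct)
    moreover have "w \<notin> {vs 0, vs 1, vs 2, vs 3, vs 4, vs 5}"
      using w_distinct[of 0] w_distinct[of 1] w_distinct[of 2] w_distinct[of 3]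
        w_distinct[of 4] w_distinct[of 5] by auto
    ultimately show "distinct [vs 0, vs 1, vs 2, vs 3, vs 4, vs 5, w]" by auto
  qed (use assms(1-8) vs_V \<open>w \<in> V\<close> he_ends f0 f1 at_0 at_1 f2 f3 f4 f5 g core in auto)
  then show thesis by (rule that)
qed

section \<open>The perfect matching index\<close>

lemma colourable_of_perfect_matching_cover:
  assumes ends_in_V: "\<forall>e\<in>E. fst (ep e) \<in> V \<and> snd (ep e) \<in> V"
    and "finite Ms" "card Ms \<le> 3" "\<forall>M\<in>Ms. perfect_matching V E ep M" "\<Union>Ms = E"
  shows "three_edge_colourable E ep"
proof -
  obtain xs where xs: "set xs = Ms" "distinct xs" using finite_distinct_list[OF assms(2)] by blast
  have "length xs \<le> 3" using distinct_card[OF xs(2)] xs(1) assms(3) by simp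
  have matching: "perfect_matching V E ep (xs ! i)" if "i < length xs" for i
    using assms(4) xs(1) that by auto
  define c where "c e = (LEAST i. i < length xs \<and> e \<in> xs ! i)" for e
  have c: "c e < length xs \<and> e \<in> xs ! c e" if e: "e \<in> E" for e
  proof -
    obtain M where "M \<in> Ms" "e \<in> M" using assms(5) e by blast
    then obtain i where "i < length xs" "e \<in> xs ! i" using xs(1) by (metis in_set_conv_nth)
    then show ?thesis unfolding c_def by (rule LeastI[of _ i, OF conjI])
  qed
  show ?thesis
    unfolding three_edge_colourable_def
  proof (intro exI[of _ c] conjI ballI impI)
    fix e assume "e \<in> E"
    then show "c e < 3" "\<not> is_loop ep e"
      using c \<open>length xs \<le> 3\<close> matching unfolding perfect_matching_def by fastforce+
  next
    fix e f assume ef: "e \<in> E" "f \<in> E" "e \<noteq> f \<and> ends ep e \<inter> ends ep f \<noteq> {}"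
    then obtain v where v: "v \<in> ends ep e" "v \<in> ends ep f" by blast
    have "v \<in> V" using v(1) ef(1) ends_in_V unfolding ends_def by auto
    show "c e \<noteq> c f"
    proof
      assume same: "c e = c f"
      have "c e < length xs" "e \<in> xs ! c e" "f \<in> xs ! c f" using c ef(1,2) by auto
      then show False
        using perfect_matching_unique[OF matching \<open>v \<in> V\<close> _ _ v] same ef(3) by metis
    qed
  qed
qed

lemma perfect_matching_index_eq_4I:
  assumes "\<forall>e\<in>E. fst (ep e) \<in> V \<and> snd (ep e) \<in> V" and "\<not> three_edge_colourable E ep"
    and "perfect_matching V E ep M1" "perfect_matching V E ep M2" "perfect_matching V E ep M3"
      "perfect_matching V E ep N"
    and "distinct [M1, M2, M3, N]" and "E \<subseteq> M1 \<union> M2 \<union> M3 \<union> N"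
  shows "perfect_matching_index V E ep = 4"
  unfolding perfect_matching_index_def
proof (rule Least_equality)
  show "\<exists>Ms. finite Ms \<and> card Ms = 4 \<and> (\<forall>M\<in>Ms. perfect_matching V E ep M) \<and> \<Union>Ms = E"
  proof (intro exI conjI)
    show "card {M1, M2, M3, N} = 4" using assms(7) by simp
    show "\<Union>{M1, M2, M3, N} = E"
      using assms(3-6,8) unfolding perfect_matching_def by auto
  qed (use assms(3-6) in auto)
next
  fix k assume "\<exists>Ms. finite Ms \<and> card Ms = k \<and> (\<forall>M\<in>Ms. perfect_matching V E ep M) \<and> \<Union>Ms = E"
  then obtain Ms where Ms: "finite Ms" "card Ms = k" "\<forall>M\<in>Ms. perfect_matching V E ep M" "\<Union>Ms = E"
    by blast
  show "4 \<le> k"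
  proof (rule ccontr)
    assume "\<not> 4 \<le> k"
    then have "card Ms \<le> 3" using Ms(2) by simp
    then show False
      using colourable_of_perfect_matching_cover[OF assms(1) Ms(1) _ Ms(3,4)] assms(2) by blast
  qed
qed

lemma loopless_of_hexagonal_core:
  assumes "three_array V E ep (M1, M2, M3)" and H: "induced_hexagon_on V E ep (core E (M1, M2, M3)) vs"
  shows "\<forall>e\<in>E. \<not> is_loop ep e"
proof (intro ballI notI)
  fix e assume "e \<in> E" "is_loop ep e"
  then have "e \<notin> M1" "e \<notin> M2" "e \<notin> M3"
    using assms(1) unfolding three_array_def perfect_matching_def by auto
  then have "e \<in> core E (M1, M2, M3)" using \<open>e \<in> E\<close> unfolding core_def cover_count_def by simp
  then obtain i where "i < 6" "ends ep e = {vs i, vs (Suc i mod 6)}"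
    using H unfolding induced_hexagon_on_def by blast
  moreover have "vs i \<noteq> vs (Suc i mod 6)"
    using induced_hexagon_on_distinct[OF H \<open>i < 6\<close>] \<open>i < 6\<close> by (cases "i = 5") auto
  moreover have "ends ep e = {fst (ep e)}" using \<open>is_loop ep e\<close> unfolding is_loop_def ends_def by simp
  ultimately show False by (metis doubleton_eq_iff singleton_insert_inj_eq)
qed

lemma incident_card_of_cubic:
  assumes "cubic V E ep" and "\<forall>e\<in>E. \<not> is_loop ep e" and "v \<in> V"
  shows "card {e\<in>E. v \<in> ends ep e} = 3"
proof -
  have "{e\<in>E. v \<in> ends ep e} = {e\<in>E. fst (ep e) = v} \<union> {e\<in>E. snd (ep e) = v}"
    unfolding ends_def by auto
  moreover have "{e\<in>E. fst (ep e) = v} \<inter> {e\<in>E. snd (ep e) = v} = {}"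
    using assms(2) unfolding is_loop_def by auto
  moreover have "finite E" using assms(1) unfolding cubic_def graph_def by simp
  ultimately have "card {e\<in>E. v \<in> ends ep e} = degree E ep v"
    unfolding degree_def by (simp add: card_Un_disjoint)
  then show ?thesis using assms(1,3) unfolding cubic_def by simp
qed

lemma fourth_perfect_matching_of_hexagonal_core:
  fixes E :: "'e set"
  assumes cubic: "cubic V E ep" and not_colourable: "\<not> three_edge_colourable E ep"
    and array: "three_array V E ep (M1, M2, M3)"
    and H: "induced_hexagon_on V E ep (core E (M1, M2, M3)) vs"
    and tri: "triangle V E ep T" "T \<inter> vs ` {..<6} \<noteq> {}"
  obtains N where "perfect_matching V E ep N" "N \<notin> {M1, M2, M3}" "E \<subseteq> M1 \<union> M2 \<union> M3 \<union> N"
proof -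
  have "finite E" and ends_in_V: "\<forall>e\<in>E. fst (ep e) \<in> V \<and> snd (ep e) \<in> V"
    using cubic unfolding cubic_def graph_def by auto
  have matchings: "perfect_matching V E ep M1" "perfect_matching V E ep M2" "perfect_matching V E ep M3"
    using array unfolding three_array_def by auto
  have loopless: "\<forall>e\<in>E. \<not> is_loop ep e" by (rule loopless_of_hexagonal_core[OF array H])
  have incident_3: "\<forall>v\<in>V. card {e\<in>E. v \<in> ends ep e} = 3"
    using incident_card_of_cubic[OF cubic loopless] by blast
  obtain vs' where H': "induced_hexagon_on V E ep (core E (M1, M2, M3)) vs'" "vs' 0 \<in> T" "vs' 1 \<in> T"
    by (rule triangle_on_hexagon_edge[OF H \<open>finite E\<close> incident_3 tri])
  obtain he :: "nat \<Rightarrow> 'e" and w f0 f1 f2 f3 f4 f5 g where "hexagon_triangle V E ep M1 M2 M3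
      (vs' 0) (vs' 1) (vs' 2) (vs' 3) (vs' 4) (vs' 5) w (he 0) (he 1) (he 2) (he 3) (he 4) (he 5)
      f0 f1 f2 f3 f4 f5 g"
    by (rule hexagon_triangle_of_core[OF \<open>finite E\<close> ends_in_V loopless incident_3 matchings
        not_colourable H'(1) tri(1) H'(2,3)])
  then show thesis using that by (rule hexagon_triangle.fourth_perfect_matching)
qed

theorem theorem5p4:
  fixes V :: "'v set" and E :: "'e set" and ep :: "'e \<Rightarrow> 'v \<times> 'v"
  assumes "snark V E ep"
    and "colouring_defect V E ep = 3"
    and "\<exists>A vs T. optimal_array V E ep A \<and> induced_hexagon_on V E ep (core E A) vs \<and>
           triangle V E ep T \<and> T \<inter> vs ` {..<6} \<noteq> {}"
  shows "perfect_matching_index V E ep = 4"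
proof -
  obtain A vs T where opt: "optimal_array V E ep A" and H: "induced_hexagon_on V E ep (core E A) vs"
    and tri: "triangle V E ep T" "T \<inter> vs ` {..<6} \<noteq> {}"
    using assms(3) by blast
  obtain M1 M2 M3 where A: "A = (M1, M2, M3)" by (cases A)
  have cubic: "cubic V E ep" and not_colourable: "\<not> three_edge_colourable E ep"
    using assms(1) unfolding snark_def by auto
  have array: "three_array V E ep (M1, M2, M3)" using opt A unfolding optimal_array_def by simp
  obtain N where N: "perfect_matching V E ep N" "N \<notin> {M1, M2, M3}" "E \<subseteq> M1 \<union> M2 \<union> M3 \<union> N"
    by (rule fourth_perfect_matching_of_hexagonal_core[OF cubic not_colourable array H[unfolded A] tri])
  have "distinct [M1, M2, M3, N]" using array N(2) unfolding three_array_def by auto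
  moreover have "\<forall>e\<in>E. fst (ep e) \<in> V \<and> snd (ep e) \<in> V"
    using cubic unfolding cubic_def graph_def by auto
  ultimately show ?thesis
    using perfect_matching_index_eq_4I not_colourable array N(1,3) unfolding three_array_def by blast
qed

end
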